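(* Let $r\geq1$ be odd, $m\geq 3$, $n=(r+1)m$, let $u$ be an integer with $\gcd(u,2^m-1)=1$, let $\alpha$ be a primitive element of $\mathbb{F}_{2^{rm}}$, and let $0\leq s\leq 2^{rm}-2$ be an integer. Let $\Delta_s=\{\alpha^i\mid s\leq i\leq s+2^{rm-1}-1\}$ and let $f\colon\mathbb{F}_{2^{rm}}\times\mathbb{F}_{2^m}\to\mathbb{F}_2$ be the Boolean function with $$\mathrm{supp}(f)=\{(\gamma y^u,y)\mid y\in\mathbb{F}_{2^m}^*,\ \gamma\in\Delta_s\}.$$ Then the bivariate representation of $f$ over $\mathbb{F}_{2^{rm}}\times\mathbb{F}_{2^m}$ is $$f(x,y)=\sum_{\substack{i=1\\(2^m-1)\nmid i}}^{2^{rm}-2}\alpha^{-is}(1+\alpha^{-i})^{2^{rm-1}-1}x^iy^{2^m-1-\overline{ui}}+\sum_{j=1}^{\frac{2^{rm}-1}{2^m-1}-1}\alpha^{-(2^m-1)js}\bigl(1+\alpha^{-(2^m-1)j}\bigr)^{2^{rm-1}-1}x^{(2^m-1)j}y^{2^m-1},$$ where $\overline{ui}$ denotes the reduction of $ui$ modulo $2^m-1$ in $\{0,1,\dots,2^m-2\}$. Consequently $n-m\leq\deg f\leq n-2$.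
   Context: $\mathbb{F}_{2^m}$ is a subfield of $\mathbb{F}_{2^{rm}}$, so $\gamma y^u\in\mathbb{F}_{2^{rm}}$. $\mathbb{F}_{2^{rm}}\times\mathbb{F}_{2^m}$ is viewed as an $n$-dimensional $\mathbb{F}_2$-vector space. The bivariate representation of a Boolean function on $\mathbb{F}_{2^{rm}}\times\mathbb{F}_{2^m}$ is the unique polynomial $\sum_{i=0}^{2^{rm}-1}\sum_{j=0}^{2^m-1}c_{i,j}x^iy^j$ with $c_{i,j}\in\mathbb{F}_{2^{rm}}$ that agrees with the function everywhere. $\deg f$ denotes the algebraic degree of $f$ (degree of its algebraic normal form in $n$ binary coordinates). *)

theory Defs
  imports Main
begin

text \<open>Binary vectors of length n, represented as functions nat \<Rightarrow> bool vanishing from n on.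
  Addition over F_2 is pointwise exclusive or.\<close>
definition bvecs :: "nat \<Rightarrow> (nat \<Rightarrow> bool) set" where
  "bvecs n = {v. \<forall>i\<ge>n. \<not> v i}"

definition F2_coord_iso :: "nat \<Rightarrow> ((nat \<Rightarrow> bool) \<Rightarrow> 'a::ab_group_add \<times> 'a) \<Rightarrow> ('a \<times> 'a) set \<Rightarrow> bool" where
  "F2_coord_iso n \<phi> D \<longleftrightarrow> bij_betw \<phi> (bvecs n) D \<and>
     (\<forall>v\<in>bvecs n. \<forall>w\<in>bvecs n.
        fst (\<phi> (\<lambda>i. v i \<noteq> w i)) = fst (\<phi> v) + fst (\<phi> w) \<and>
        snd (\<phi> (\<lambda>i. v i \<noteq> w i)) = snd (\<phi> v) + snd (\<phi> w))"

definition anf_degree :: "nat \<Rightarrow> ((nat \<Rightarrow> bool) \<Rightarrow> bool) \<Rightarrow> nat" where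
  "anf_degree n g = (LEAST d. \<exists>a :: nat set \<Rightarrow> bool.
      (\<forall>S. S \<subseteq> {..<n} \<and> a S \<longrightarrow> card S \<le> d) \<and>
      (\<forall>v\<in>bvecs n. g v = odd (card {S. S \<subseteq> {..<n} \<and> a S \<and> (\<forall>i\<in>S. v i)})))"

text \<open>Algebraic degree of a Boolean function on an n-dimensional F_2-space D of pairs,
  computed in coordinates w.r.t. a (chosen) F_2-linear isomorphism F_2^n \<rightarrow> D.
  (The ANF degree does not depend on this choice.)\<close>
definition bool_alg_deg :: "nat \<Rightarrow> ('a::ab_group_add \<times> 'a) set \<Rightarrow> ('a \<times> 'a \<Rightarrow> bool) \<Rightarrow> nat" where
  "bool_alg_deg n D f = anf_degree n (f \<circ> (SOME \<phi>. F2_coord_iso n \<phi> D))"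

end

(*
  Write N = 2^(rm), M = 2^m - 1, L = 2^(rm-1) = card Delta_s, and let K = F_(2^m).
  For y in K - {0} put w = y^(-u); then y^(M - (u i mod M)) = w^i, so the right-hand side
  is sum_(i=1..N-2) c_i (x w)^i.  Expanding (1 + alpha^(-i))^(L-1) in characteristic two
  gives c_i = sum_(t<L) alpha^(-(s+t) i), and sum_(i=1..N-2) z^i is 1 + [z = 1] for z ~= 0,
  so the right-hand side is the indicator of x y^(-u) in Delta_s.

  Upper bound: the ANF coefficient of the monomial over a set S of coordinates is the sum of
  f over the subcube spanned by S.  Coordinates enter x and y linearly, so by the
  representation this is a combination of sums over a subcube of products of
  wt(i) + wt(j) <= n - 2 linear forms, which vanish as soon as card S > n - 2.

  Lower bound: if deg f < rm, every coordinate function is a linearized polynomial in x plus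
  a function of y, and pairing the ANF with x y^e, e = -u (mod M), gives 0 because
  sum_x x^k = 0 unless wt(k) >= rm.  Computed directly from the support, the same pairing is
  sum_(gamma in Delta_s) gamma = alpha^s (alpha^L - 1) / (alpha - 1) ~= 0.
*)

theory Submission
  imports Defs "HOL-Computational_Algebra.Polynomial" "HOL-Library.FuncSet"
    "HOL-Library.Product_Plus" "HOL-Library.Z2"
begin

section \<open>Binary weight\<close>

definition binary_support :: "nat \<Rightarrow> nat set" where
  "binary_support n = {t. bit n t}"

definition binary_weight :: "nat \<Rightarrow> nat" where
  "binary_weight n = card (binary_support n)"

lemma binary_support_rec:
  "binary_support n = (if odd n then {0} else {}) \<union> Suc ` binary_support (n div 2)"
proof (rule set_eqI)
  fix t
  show "t \<in> binary_support n \<longleftrightarrow> t \<in> (if odd n then {0} else {}) \<union> Suc ` binary_support (n div 2)"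
    by (cases t) (auto simp: binary_support_def bit_0 bit_Suc)
qed

lemma binary_support_0 [simp]: "binary_support 0 = {}"
  by (simp add: binary_support_def)

lemma pow2_le_if_binary_support: "t \<in> binary_support n \<Longrightarrow> 2 ^ t \<le> n"
proof -
  assume "t \<in> binary_support n"
  then have "odd (n div 2 ^ t)" by (simp add: binary_support_def bit_iff_odd)
  then have "1 \<le> n div 2 ^ t" by (cases "n div 2 ^ t") auto
  then have "2 ^ t * 1 \<le> 2 ^ t * (n div 2 ^ t)" by (intro mult_le_mono2)
  also have "\<dots> \<le> n" by (metis div_mult_mod_eq le_add1 mult.commute)
  finally show ?thesis by simp
qed

lemma binary_support_subset: "n < 2 ^ w \<Longrightarrow> binary_support n \<subseteq> {..<w}"
proof
  fix t assume "n < 2 ^ w" "t \<in> binary_support n"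
  then have "2 ^ t < (2::nat) ^ w" using pow2_le_if_binary_support[of t n] by linarith
  then show "t \<in> {..<w}" by simp
qed

lemma finite_binary_support [simp]: "finite (binary_support n)"
  using binary_support_subset[of n n] finite_subset by (metis finite_lessThan less_exp)

lemma sum_binary_support: "(\<Sum>t\<in>binary_support n. (2::nat) ^ t) = n"
proof (induction n rule: less_induct)
  case (less n)
  show ?case
  proof (cases "n = 0")
    case False
    have d: "(\<Sum>t\<in>Suc ` binary_support (n div 2). (2::nat) ^ t) = 2 * (n div 2)"
      using less[of "n div 2"] False by (simp add: sum.reindex sum_distrib_left[symmetric])
    show ?thesis
    proof (cases "odd n")
      case True
      have "(\<Sum>t\<in>binary_support n. (2::nat) ^ t) = 1 + (\<Sum>t\<in>Suc ` binary_support (n div 2). 2 ^ t)"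
        by (subst binary_support_rec) (simp add: True sum.insert image_iff)
      then show ?thesis using d True by presburger
    next
      case False
      have "(\<Sum>t\<in>binary_support n. (2::nat) ^ t) = (\<Sum>t\<in>Suc ` binary_support (n div 2). 2 ^ t)"
        by (subst binary_support_rec) (simp add: False)
      then show ?thesis using d False by presburger
    qed
  qed simp
qed

lemma binary_weight_rec: "binary_weight n = n mod 2 + binary_weight (n div 2)"
proof -
  have c: "card (Suc ` binary_support (n div 2)) = binary_weight (n div 2)"
    by (simp add: binary_weight_def card_image)
  show ?thesis
  proof (cases "odd n")
    case True
    have "binary_weight n = card (insert 0 (Suc ` binary_support (n div 2)))"
      unfolding binary_weight_def by (subst binary_support_rec) (simp add: True)
    also have "\<dots> = Suc (binary_weight (n div 2))" using c by (subst card_insert_disjoint) auto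
    finally show ?thesis using True by (simp add: odd_iff_mod_2_eq_one)
  next
    case False
    have "binary_weight n = card (Suc ` binary_support (n div 2))"
      unfolding binary_weight_def by (subst binary_support_rec) (simp add: False)
    then show ?thesis using c False by (simp add: even_iff_mod_2_eq_zero)
  qed
qed

lemma binary_weight_0 [simp]: "binary_weight 0 = 0"
  by (simp add: binary_weight_def)

lemma binary_weight_pow2 [simp]: "binary_weight (2 ^ t) = 1"
proof (induction t)
  case 0
  then show ?case using binary_weight_rec[of 1] by simp
next
  case (Suc t)
  then show ?case using binary_weight_rec[of "2 ^ Suc t"] by simp
qed

lemma binary_weight_add_le: "binary_weight (a + b) \<le> binary_weight a + binary_weight b"
proof (induction "a + b" arbitrary: a b rule: less_induct)
  case less
  show ?case
  proof (cases "a + b = 0")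
    case True
    then show ?thesis by simp
  next
    case False
    define c where "c = (if odd a \<and> odd b then 1 else (0::nat))"
    have carry: "(a + b) div 2 = a div 2 + b div 2 + c" unfolding c_def by presburger
    have low: "(a + b) mod 2 + c \<le> a mod 2 + b mod 2" unfolding c_def by presburger
    have lt1: "a div 2 + b div 2 + c < a + b" using False unfolding c_def by presburger
    have lt2: "a div 2 + b div 2 < a + b" using lt1 by simp
    have "binary_weight (a + b) = (a + b) mod 2 + binary_weight (a div 2 + b div 2 + c)"
      by (subst binary_weight_rec) (simp add: carry)
    also have "\<dots> \<le> (a + b) mod 2 + binary_weight (a div 2 + b div 2) + binary_weight c"
      using less[OF lt1] by simp
    also have "\<dots> \<le> (a + b) mod 2 + binary_weight (a div 2) + binary_weight (b div 2) + binary_weight c"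
      using less[OF lt2] by simp
    also have "binary_weight c = c" unfolding c_def using binary_weight_pow2[of 0] by simp
    also have "(a + b) mod 2 + binary_weight (a div 2) + binary_weight (b div 2) + c
        \<le> binary_weight a + binary_weight b"
      using low binary_weight_rec[of a] binary_weight_rec[of b] by simp
    finally show ?thesis by simp
  qed
qed

lemma binary_weight_sum_le: "binary_weight (\<Sum>i\<in>S. h i) \<le> (\<Sum>i\<in>S. binary_weight (h i))"
proof (cases "finite S")
  case True
  then show ?thesis
    by (induction S rule: finite_induct) (auto intro: order_trans[OF binary_weight_add_le])
qed simp

lemma binary_weight_concat:
  "r < 2 ^ w \<Longrightarrow> binary_weight (q * 2 ^ w + r) = binary_weight q + binary_weight r"
proof (induction w arbitrary: r)
  case 0
  then show ?case by simp
next
  case (Suc w)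
  have a: "(q * 2 ^ Suc w + r) div 2 = q * 2 ^ w + r div 2" by simp
  have b0: "q * 2 ^ Suc w + r = r + 2 * (q * 2 ^ w)" by simp
  have b: "(q * 2 ^ Suc w + r) mod 2 = r mod 2" unfolding b0 by simp
  have c: "r div 2 < 2 ^ w" using Suc.prems by simp
  have "binary_weight (q * 2 ^ Suc w + r) = r mod 2 + binary_weight (q * 2 ^ w + r div 2)"
    by (subst binary_weight_rec) (simp only: a b)
  also have "\<dots> = r mod 2 + binary_weight q + binary_weight (r div 2)" using Suc.IH[OF c] by simp
  also have "\<dots> = binary_weight q + binary_weight r" using binary_weight_rec[of r] by simp
  finally show ?case .
qed

lemma binary_weight_mask: "binary_weight (2 ^ w - 1) = w"
proof (induction w)
  case 0
  then show ?case by simp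
next
  case (Suc w)
  have "(2::nat) ^ Suc w - 1 = 1 * 2 ^ w + (2 ^ w - 1)" by simp
  then have "binary_weight (2 ^ Suc w - 1) = binary_weight 1 + binary_weight (2 ^ w - 1)"
    using binary_weight_concat[of "2 ^ w - 1" w 1] by simp
  then show ?case using Suc binary_weight_pow2[of 0] by simp
qed

lemma power_binary_support:
  "x ^ n = (\<Prod>t\<in>binary_support n. (x::'b::comm_monoid_mult) ^ (2 ^ t))"
proof -
  have "x ^ n = x ^ (\<Sum>t\<in>binary_support n. 2 ^ t)" by (simp add: sum_binary_support)
  then show ?thesis by (simp add: power_sum)
qed

lemma binary_weight_ge_if_mask_dvd:
  assumes w: "0 < w" and "(2 ^ w - 1) dvd a" and "0 < a"
  shows "w \<le> binary_weight a"
  using assms(2,3)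
proof (induction a rule: less_induct)
  case (less a)
  have w2: "2 \<le> (2::nat) ^ w" using power_increasing[of 1 w "2::nat"] w by simp
  show ?case
  proof (cases "a < 2 ^ w")
    case True
    obtain c where c: "a = (2 ^ w - 1) * c" using less.prems(1) by (auto elim: dvdE)
    have "c \<noteq> 0" using c less.prems(2) by auto
    moreover have "\<not> 2 \<le> c"
    proof
      assume "2 \<le> c"
      then have "(2 ^ w - 1) * 2 \<le> a" unfolding c by (rule mult_le_mono2)
      then show False using True w2 by linarith
    qed
    ultimately have "c = 1" by linarith
    then show ?thesis using c binary_weight_mask[of w] by simp
  next
    case False
    define q where "q = a div 2 ^ w"
    define r where "r = a mod 2 ^ w"
    have a: "a = q * 2 ^ w + r" unfolding q_def r_def by (rule div_mult_mod_eq[symmetric])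
    have q: "1 \<le> q" using False unfolding q_def by (simp add: Suc_le_eq div_greater_zero_iff)
    have "q * 1 < q * 2 ^ w" using q w2 by (intro mult_strict_left_mono) auto
    then have smaller: "q + r < a" using a by simp
    have "a = (q + r) + q * (2 ^ w - 1)" using a by (simp add: diff_mult_distrib2)
    then have "(2 ^ w - 1) dvd q + r"
      using less.prems(1) by (metis dvd_add_times_triv_right_iff mult.commute)
    then have "w \<le> binary_weight (q + r)" using less.IH[OF smaller] q by simp
    also have "\<dots> \<le> binary_weight q + binary_weight r" by (rule binary_weight_add_le)
    also have "\<dots> = binary_weight a" using a binary_weight_concat[of r w q] unfolding r_def by simp
    finally show ?thesis .
  qed
qed

lemma binary_weight_add_card_complement:
  assumes "x < 2 ^ w"
  shows "binary_weight x + card ({..<w} - binary_support x) = w"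
proof -
  have sub: "binary_support x \<subseteq> {..<w}" using binary_support_subset[OF assms] .
  then have "card (binary_support x) \<le> w" using card_mono[OF finite_lessThan] by fastforce
  with sub show ?thesis unfolding binary_weight_def by (simp add: card_Diff_subset)
qed

lemma sum_binary_complement:
  assumes "x < 2 ^ w"
  shows "x + (\<Sum>t\<in>{..<w} - binary_support x. (2::nat) ^ t) = 2 ^ w - 1"
proof -
  have "binary_support x \<subseteq> {..<w}" using binary_support_subset[OF assms] .
  then have "x + (\<Sum>t\<in>{..<w} - binary_support x. (2::nat) ^ t) = (\<Sum>t<w. 2 ^ t)"
    by (metis sum_binary_support finite_lessThan sum.subset_diff add.commute)
  also have "\<dots> = 2 ^ w - 1" by (induction w) simp_all
  finally show ?thesis .
qed

lemma binary_weight_less_if_less_mask: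
  assumes "x < 2 ^ w - 1"
  shows "binary_weight x < w"
proof -
  have x: "x < 2 ^ w" using assms by simp
  have "{..<w} - binary_support x \<noteq> {}"
  proof
    assume e: "{..<w} - binary_support x = {}"
    from sum_binary_complement[OF x] have "x = 2 ^ w - 1" by (simp only: e sum.empty add_0_right)
    then show False using assms by simp
  qed
  then have "0 < card ({..<w} - binary_support x)" by (simp add: card_gt_0_iff)
  then show ?thesis using binary_weight_add_card_complement[OF x] by linarith
qed

lemma binary_weight_le_minus2:
  assumes x: "x < 2 ^ w" and "x \<noteq> 2 ^ w - 1" and "\<And>t. x \<noteq> 2 ^ w - 1 - 2 ^ t"
  shows "binary_weight x \<le> w - 2"
proof -
  define C where "C = {..<w} - binary_support x"
  have sum: "x + (\<Sum>t\<in>C. (2::nat) ^ t) = 2 ^ w - 1"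
    unfolding C_def by (rule sum_binary_complement[OF x])
  have "card C \<noteq> 0"
  proof
    assume "card C = 0"
    then have "C = {}" unfolding C_def by simp
    then show False using sum assms(2) by simp
  qed
  moreover have "card C \<noteq> 1"
  proof
    assume "card C = 1"
    then obtain t where "C = {t}" by (auto simp: card_Suc_eq)
    then show False using sum assms(3)[of t] by simp
  qed
  ultimately have "2 \<le> card C" by linarith
  then show ?thesis
    using binary_weight_add_card_complement[OF x] unfolding C_def by linarith
qed

section \<open>Rings of characteristic two\<close>

lemma sum_Pow_insert:
  assumes "x \<notin> S" "finite S"
  shows "(\<Sum>T\<in>Pow (insert x S). H T) = (\<Sum>T\<in>Pow S. H T) + (\<Sum>T\<in>Pow S. H (insert x T))"
proof -
  have "inj_on (insert x) (Pow S)"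
    using assms(1) unfolding inj_on_def by (metis PowD insert_ident subsetD)
  moreover have "Pow S \<inter> insert x ` Pow S = {}" using assms(1) by auto
  ultimately show ?thesis
    unfolding Pow_insert using assms(2) by (subst sum.union_disjoint) (auto simp: sum.reindex)
qed

lemma prod_of_bool: "finite S \<Longrightarrow> (\<Prod>i\<in>S. of_bool (P i)) = (of_bool (\<forall>i\<in>S. P i) :: 'b::comm_semiring_1)"
  by (induction S rule: finite_induct) auto

context
  assumes char2: "(2::'b::comm_ring_1) = 0"
begin

lemma char2_add_self: "x + x = (0::'b)"
proof -
  have "x + x = 2 * x" by (rule mult_2[symmetric])
  then show ?thesis using char2 by simp
qed

lemma char2_uminus: "- x = (x::'b)"
  using char2_add_self[of x] by (simp add: add_eq_0_iff)

lemma char2_of_nat: "(of_nat n :: 'b) = of_bool (odd n)"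
  by (induction n) (auto simp: char2_add_self)

lemma char2_power2_add: "(a + b) ^ (2 ^ t) = a ^ (2 ^ t) + (b ^ (2 ^ t) :: 'b)"
proof (induction t)
  case (Suc t)
  have sq: "x ^ (2 ^ Suc t) = (x ^ (2 ^ t)) ^ 2" for x :: 'b
    by (simp add: power_mult[symmetric] mult.commute)
  have "(a + b) ^ (2 ^ Suc t) = (a ^ (2 ^ t) + b ^ (2 ^ t)) ^ 2"
    by (simp only: sq Suc)
  also have "\<dots> = (a ^ (2 ^ t)) ^ 2 + (b ^ (2 ^ t)) ^ 2 + 2 * a ^ (2 ^ t) * b ^ (2 ^ t)"
    by (rule power2_sum)
  also have "\<dots> = a ^ (2 ^ Suc t) + b ^ (2 ^ Suc t)"
    by (simp only: sq char2 mult_zero_left add_0_right)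
  finally show ?case .
qed simp

lemma char2_sum_power2: "(\<Sum>l\<in>T. X l) ^ (2 ^ t) = (\<Sum>l\<in>T. (X l :: 'b) ^ (2 ^ t))"
proof (induction T rule: infinite_finite_induct)
  case (infinite T)
  then show ?case by (simp add: zero_power)
qed (simp_all add: char2_power2_add zero_power)

lemma char2_geometric: "(1 + b) ^ (2 ^ e - 1) = (\<Sum>t<2 ^ e. (b::'b) ^ t)"
proof (induction e)
  case (Suc e)
  have "(2::nat) ^ Suc e - 1 = (2 ^ e - 1) + 2 ^ e" by simp
  then have "(1 + b) ^ (2 ^ Suc e - 1) = (1 + b) ^ (2 ^ e - 1) * (1 + b) ^ (2 ^ e)"
    by (simp only: power_add)
  also have "\<dots> = (\<Sum>t<2 ^ e. b ^ t) * (1 + b ^ (2 ^ e))"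
    using Suc char2_power2_add[of 1 b e] by simp
  also have "\<dots> = (\<Sum>t<2 ^ e. b ^ t) + (\<Sum>t<2 ^ e. b ^ t) * b ^ (2 ^ e)"
    by (simp add: algebra_simps)
  also have "\<dots> = (\<Sum>t<2 ^ e. b ^ t) + (\<Sum>t<2 ^ e. b ^ (2 ^ e + t))"
    unfolding sum_distrib_right by (simp add: power_add mult.commute)
  also have "\<dots> = (\<Sum>t<2 ^ e + 2 ^ e. b ^ t)"
  proof -
    have "(\<Sum>t<k + c. b ^ t) = (\<Sum>t<k. b ^ t) + (\<Sum>t<c. b ^ (k + t))" for k c
      by (induction c) (simp_all add: add.assoc)
    then show ?thesis by simp
  qed
  finally show ?case by (simp only: power_Suc mult_2)
qed simp

lemma sum_Pow_Pow_char2: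
  "finite V \<Longrightarrow> (\<Sum>S\<in>Pow V. \<Sum>T\<in>Pow S. h T) = (h V :: 'b)"
proof (induction V arbitrary: h rule: finite_induct)
  case (insert x V)
  have fS: "finite S \<and> x \<notin> S" if "S \<in> Pow V" for S
    using that insert(1,2) finite_subset by auto
  have "(\<Sum>S\<in>Pow (insert x V). \<Sum>T\<in>Pow S. h T)
      = (\<Sum>S\<in>Pow V. \<Sum>T\<in>Pow S. h T) + (\<Sum>S\<in>Pow V. \<Sum>T\<in>Pow (insert x S). h T)"
    by (rule sum_Pow_insert[OF insert(2,1)])
  also have "(\<Sum>S\<in>Pow V. \<Sum>T\<in>Pow (insert x S). h T)
      = (\<Sum>S\<in>Pow V. (\<Sum>T\<in>Pow S. h T) + (\<Sum>T\<in>Pow S. h (insert x T)))"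
    by (rule sum.cong[OF refl], rule sum_Pow_insert) (use fS in auto)
  also have "\<dots> = (\<Sum>S\<in>Pow V. \<Sum>T\<in>Pow S. h T) + (\<Sum>S\<in>Pow V. \<Sum>T\<in>Pow S. h (insert x T))"
    by (rule sum.distrib)
  also have "(\<Sum>S\<in>Pow V. \<Sum>T\<in>Pow S. h T) + \<dots> = (\<Sum>S\<in>Pow V. \<Sum>T\<in>Pow S. h (insert x T))"
    by (simp add: add.assoc[symmetric] char2_add_self)
  also have "\<dots> = h (insert x V)" by (rule insert.IH)
  finally show ?case .
qed simp

text \<open>Remove a point \<open>l\<^sub>0\<close> of \<open>S\<close>: the leading term cancels in pairs and the remaining
  terms have fewer factors.\<close>
lemma sum_Pow_prod_sum_char2:
  "finite A \<Longrightarrow> finite S \<Longrightarrow> card A < card S \<Longrightarrow>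
    (\<Sum>T\<in>Pow S. \<Prod>a\<in>A. \<Sum>l\<in>T. c a l) = (0::'b)"
proof (induction "card A" arbitrary: A S rule: less_induct)
  case less
  obtain l0 where l0: "l0 \<in> S" using less.prems(3) by (metis card.empty ex_in_conv not_less0)
  define S' where "S' = S - {l0}"
  have S: "S = insert l0 S'" and l0S': "l0 \<notin> S'" and fS': "finite S'"
    using l0 less.prems(2) unfolding S'_def by auto
  have cS': "card A \<le> card S'" using less.prems(3) S l0S' fS' by simp
  define L where "L T a = (\<Sum>l\<in>T. c a l)" for T a
  have expand: "(\<Prod>a\<in>A. L (insert l0 T) a) = (\<Prod>a\<in>A. L T a)
      + (\<Sum>B\<in>Pow A - {A}. (\<Prod>a\<in>B. L T a) * (\<Prod>a\<in>A - B. c a l0))" if "T \<in> Pow S'" for T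
  proof -
    have "finite T" "l0 \<notin> T" using that fS' l0S' finite_subset by auto
    then have "(\<Prod>a\<in>A. L (insert l0 T) a) = (\<Prod>a\<in>A. L T a + c a l0)"
      unfolding L_def by (simp add: add.commute)
    also have "\<dots> = (\<Sum>B\<in>Pow A. (\<Prod>a\<in>B. L T a) * (\<Prod>a\<in>A - B. c a l0))"
      by (rule prod_add[OF less.prems(1)])
    also have "\<dots> = (\<Prod>a\<in>A. L T a) + (\<Sum>B\<in>Pow A - {A}. (\<Prod>a\<in>B. L T a) * (\<Prod>a\<in>A - B. c a l0))"
      using less.prems(1) by (subst sum.remove[of _ A]) auto
    finally show ?thesis .
  qed
  have smaller: "(\<Sum>T\<in>Pow S'. \<Prod>a\<in>B. L T a) = 0" if "B \<in> Pow A - {A}" for B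
  proof -
    have "B \<subset> A" using that by auto
    then have "card B < card A" "finite B"
      using less.prems(1) by (auto simp: psubset_card_mono finite_subset)
    then show ?thesis unfolding L_def using less.hyps[of B S'] fS' cS' by simp
  qed
  have "(\<Sum>T\<in>Pow S. \<Prod>a\<in>A. L T a)
      = (\<Sum>T\<in>Pow S'. \<Prod>a\<in>A. L T a) + (\<Sum>T\<in>Pow S'. \<Prod>a\<in>A. L (insert l0 T) a)"
    unfolding S by (rule sum_Pow_insert[OF l0S' fS'])
  also have "(\<Sum>T\<in>Pow S'. \<Prod>a\<in>A. L (insert l0 T) a) = (\<Sum>T\<in>Pow S'. \<Prod>a\<in>A. L T a)
      + (\<Sum>T\<in>Pow S'. \<Sum>B\<in>Pow A - {A}. (\<Prod>a\<in>B. L T a) * (\<Prod>a\<in>A - B. c a l0))"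
    by (simp add: expand sum.distrib)
  also have "(\<Sum>T\<in>Pow S'. \<Sum>B\<in>Pow A - {A}. (\<Prod>a\<in>B. L T a) * (\<Prod>a\<in>A - B. c a l0))
      = (\<Sum>B\<in>Pow A - {A}. (\<Sum>T\<in>Pow S'. \<Prod>a\<in>B. L T a) * (\<Prod>a\<in>A - B. c a l0))"
    by (subst sum.swap) (simp add: sum_distrib_right)
  also have "\<dots> = 0" by (simp add: smaller)
  finally show ?case
    unfolding L_def by (simp add: char2 char2_add_self)
qed

lemma sum_Pow_monomial_char2:
  assumes "finite S" and "binary_weight a + binary_weight b < card S"
  shows "(\<Sum>T\<in>Pow S. (\<Sum>l\<in>T. X l) ^ a * (\<Sum>l\<in>T. Y l) ^ b) = (0::'b)"
proof -
  define I where "I = Inl ` binary_support a \<union> Inr ` binary_support b"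
  define c where "c \<tau> l = (case \<tau> of Inl t \<Rightarrow> X l ^ (2 ^ t) | Inr t \<Rightarrow> Y l ^ (2 ^ t))" for \<tau> l
  have "card I = binary_weight a + binary_weight b"
    unfolding I_def binary_weight_def by (subst card_Un_disjoint) (auto simp: card_image)
  moreover have "(\<Sum>l\<in>T. X l) ^ a * (\<Sum>l\<in>T. Y l) ^ b = (\<Prod>\<tau>\<in>I. \<Sum>l\<in>T. c \<tau> l)" for T
  proof -
    have "(\<Prod>\<tau>\<in>I. \<Sum>l\<in>T. c \<tau> l)
        = (\<Prod>t\<in>binary_support a. \<Sum>l\<in>T. X l ^ (2 ^ t)) * (\<Prod>t\<in>binary_support b. \<Sum>l\<in>T. Y l ^ (2 ^ t))"
      unfolding I_def by (subst prod.union_disjoint) (auto simp: prod.reindex c_def)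
    then show ?thesis
      unfolding power_binary_support[of "\<Sum>l\<in>T. X l" a] power_binary_support[of "\<Sum>l\<in>T. Y l" b]
      by (simp only: char2_sum_power2)
  qed
  ultimately show ?thesis
    using sum_Pow_prod_sum_char2[of I S c] assms by (simp add: I_def)
qed

end

section \<open>Algebraic normal form\<close>

definition bvec_of :: "nat set \<Rightarrow> nat \<Rightarrow> bool" where
  "bvec_of T = (\<lambda>i. i \<in> T)"

lemma bvec_of_in_bvecs: "T \<subseteq> {..<n} \<Longrightarrow> bvec_of T \<in> bvecs n"
  unfolding bvec_of_def bvecs_def by auto

lemma bvecs_eq_bvec_of: "v \<in> bvecs n \<Longrightarrow> v = bvec_of {i. v i} \<and> {i. v i} \<subseteq> {..<n}"
  unfolding bvec_of_def bvecs_def by (auto simp: not_le[symmetric])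

text \<open>Moebius inversion on the subset lattice: the coefficient of the monomial
  \<open>\<Prod>i\<in>S. v i\<close> in the ANF of \<open>g\<close> is the parity of \<open>g\<close> on the subcube spanned by \<open>S\<close>.\<close>
definition anf_coeff :: "((nat \<Rightarrow> bool) \<Rightarrow> bool) \<Rightarrow> nat set \<Rightarrow> bool" where
  "anf_coeff g S \<longleftrightarrow> odd (card {T. T \<subseteq> S \<and> g (bvec_of T)})"

lemma anf_coeff_represents:
  assumes "v \<in> bvecs n"
  shows "g v = odd (card {S. S \<subseteq> {..<n} \<and> anf_coeff g S \<and> (\<forall>i\<in>S. v i)})"
proof -
  define V where "V = {i. v i}"
  have v: "v = bvec_of V" and Vn: "V \<subseteq> {..<n}"
    using bvecs_eq_bvec_of[OF assms] unfolding V_def by auto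
  have fV: "finite V" using Vn finite_subset by auto
  have "{S. S \<subseteq> {..<n} \<and> anf_coeff g S \<and> (\<forall>i\<in>S. v i)} = Pow V \<inter> {S. anf_coeff g S}"
    unfolding V_def using Vn V_def by auto
  moreover have "(of_bool (odd (card (Pow V \<inter> {S. anf_coeff g S}))) :: bit) = of_bool (g v)"
  proof -
    have "(of_bool (odd (card (Pow V \<inter> {S. anf_coeff g S}))) :: bit) = (\<Sum>S\<in>Pow V. of_bool (anf_coeff g S))"
      using fV by (simp add: char2_of_nat[OF bit_2_eq_0, symmetric])
    also have "\<dots> = (\<Sum>S\<in>Pow V. \<Sum>T\<in>Pow S. of_bool (g (bvec_of T)))"
    proof (rule sum.cong[OF refl])
      fix S assume "S \<in> Pow V"
      then have "finite S" using fV finite_subset by auto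
      moreover have "{T. T \<subseteq> S \<and> g (bvec_of T)} = Pow S \<inter> {T. g (bvec_of T)}" by auto
      ultimately show "of_bool (anf_coeff g S) = (\<Sum>T\<in>Pow S. of_bool (g (bvec_of T)) :: bit)"
        unfolding anf_coeff_def by (simp add: char2_of_nat[OF bit_2_eq_0, symmetric])
    qed
    also have "\<dots> = of_bool (g v)" unfolding v by (rule sum_Pow_Pow_char2[OF bit_2_eq_0 fV])
    finally show ?thesis .
  qed
  ultimately show ?thesis by (simp add: of_bool_eq_iff)
qed

lemma anf_degree_le:
  assumes "\<And>S. S \<subseteq> {..<n} \<Longrightarrow> d < card S \<Longrightarrow> \<not> anf_coeff g S"
  shows "anf_degree n g \<le> d"
  unfolding anf_degree_def
proof (rule Least_le, intro exI conjI)
  show "\<forall>S. S \<subseteq> {..<n} \<and> anf_coeff g S \<longrightarrow> card S \<le> d"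
    using assms leI by blast
  show "\<forall>v\<in>bvecs n. g v = odd (card {S. S \<subseteq> {..<n} \<and> anf_coeff g S \<and> (\<forall>i\<in>S. v i)})"
    by (intro ballI anf_coeff_represents)
qed

lemma anf_degree_witness:
  "\<exists>a. (\<forall>S. S \<subseteq> {..<n} \<and> a S \<longrightarrow> card S \<le> anf_degree n g) \<and>
      (\<forall>v\<in>bvecs n. g v = odd (card {S. S \<subseteq> {..<n} \<and> a S \<and> (\<forall>i\<in>S. v i)}))"
  unfolding anf_degree_def
proof (rule LeastI_ex, intro exI conjI)
  show "\<forall>S. S \<subseteq> {..<n} \<and> anf_coeff g S \<longrightarrow> card S \<le> n"
    using card_mono[OF finite_lessThan, of _ n] by simp
  show "\<forall>v\<in>bvecs n. g v = odd (card {S. S \<subseteq> {..<n} \<and> anf_coeff g S \<and> (\<forall>i\<in>S. v i)})"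
    by (intro ballI anf_coeff_represents)
qed

lemma anf_indicator_sum_prod:
  assumes char2: "(2::'b::comm_ring_1) = 0"
    and rep: "\<forall>v\<in>bvecs n. g v = odd (card {S. S \<subseteq> {..<n} \<and> a S \<and> (\<forall>i\<in>S. v i)})"
    and v: "v \<in> bvecs n"
  shows "(of_bool (g v) :: 'b) = (\<Sum>S | S \<subseteq> {..<n} \<and> a S. \<Prod>i\<in>S. of_bool (v i))"
proof -
  have fin: "finite {S. S \<subseteq> {..<n} \<and> a S}" by simp
  have "{S. S \<subseteq> {..<n} \<and> a S \<and> (\<forall>i\<in>S. v i)} = {S. S \<subseteq> {..<n} \<and> a S} \<inter> {S. \<forall>i\<in>S. v i}"
    by auto
  then have "g v = odd (card ({S. S \<subseteq> {..<n} \<and> a S} \<inter> {S. \<forall>i\<in>S. v i}))"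
    using rep v by simp
  then have "(of_bool (g v) :: 'b) = of_nat (card ({S. S \<subseteq> {..<n} \<and> a S} \<inter> {S. \<forall>i\<in>S. v i}))"
    by (simp only: char2_of_nat[OF char2, symmetric])
  also have "\<dots> = (\<Sum>S | S \<subseteq> {..<n} \<and> a S. of_bool (\<forall>i\<in>S. v i))"
    using fin by simp
  also have "\<dots> = (\<Sum>S | S \<subseteq> {..<n} \<and> a S. \<Prod>i\<in>S. of_bool (v i))"
    by (rule sum.cong) (auto simp: prod_of_bool finite_subset)
  finally show ?thesis .
qed

section \<open>Bases of finite elementary abelian 2-groups\<close>

definition bvec_comb :: "nat \<Rightarrow> (nat \<Rightarrow> 'b::ab_group_add) \<Rightarrow> (nat \<Rightarrow> bool) \<Rightarrow> 'b" where
  "bvec_comb k b v = (\<Sum>t<k. if v t then b t else 0)"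

lemma bvecs_image: "bvecs k = bvec_of ` Pow {..<k}"
proof
  show "bvecs k \<subseteq> bvec_of ` Pow {..<k}"
  proof
    fix v assume "v \<in> bvecs k"
    from bvecs_eq_bvec_of[OF this] show "v \<in> bvec_of ` Pow {..<k}" by blast
  qed
qed (auto intro: bvec_of_in_bvecs)

lemma card_bvecs: "card (bvecs k) = 2 ^ k" and finite_bvecs [simp]: "finite (bvecs k)"
proof -
  have "inj_on bvec_of (Pow {..<k})" unfolding inj_on_def bvec_of_def by (auto simp: fun_eq_iff)
  then show "card (bvecs k) = 2 ^ k" unfolding bvecs_image by (simp add: card_image card_Pow)
  show "finite (bvecs k)" unfolding bvecs_image by simp
qed

lemma bvec_comb_xor:
  assumes "\<forall>x::'b::ab_group_add. x + x = 0"
  shows "bvec_comb k (b :: nat \<Rightarrow> 'b) (\<lambda>i. v i \<noteq> w i) = bvec_comb k b v + bvec_comb k b w"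
  unfolding bvec_comb_def sum.distrib[symmetric] by (rule sum.cong) (auto simp: assms[rule_format])

lemma bvec_comb_in:
  assumes "0 \<in> G" "\<forall>x\<in>G. \<forall>y\<in>G. x + y \<in> G" "\<forall>t<k. b t \<in> G"
  shows "bvec_comb k b v \<in> G"
  using assms(3) by (induction k) (simp_all add: bvec_comb_def assms(1,2) lessThan_Suc)

lemma additive_bvec_comb:
  fixes h :: "'b::ab_group_add \<Rightarrow> 'c::ab_group_add"
  assumes z: "0 \<in> G" and cl: "\<forall>x\<in>G. \<forall>y\<in>G. x + y \<in> G" and b: "\<forall>t<k. b t \<in> G"
    and add: "\<forall>x\<in>G. \<forall>y\<in>G. h (x + y) = h x + h y"
  shows "h (bvec_comb k b v) = bvec_comb k (\<lambda>t. h (b t)) v"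
proof -
  have h0: "h 0 = 0" using add z by (metis add_cancel_right_right)
  show ?thesis
    using b
  proof (induction k)
    case 0
    then show ?case by (simp add: bvec_comb_def h0)
  next
    case (Suc k)
    have "bvec_comb k b v \<in> G" using bvec_comb_in[OF z cl] Suc.prems by auto
    moreover have "(if v k then b k else 0) \<in> G" using Suc.prems z by auto
    ultimately have "h (bvec_comb (Suc k) b v) = h (bvec_comb k b v) + h (if v k then b k else 0)"
      using add by (simp add: bvec_comb_def)
    then show ?case using Suc h0 by (simp add: bvec_comb_def)
  qed
qed

lemma inj_bvec_comb_extend:
  fixes b :: "nat \<Rightarrow> 'b::ab_group_add"
  assumes c2: "\<forall>x::'b. x + x = 0"
    and inj: "inj_on (bvec_comb j b) (bvecs j)" and g: "g \<notin> bvec_comb j b ` bvecs j"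
  shows "inj_on (bvec_comb (Suc j) (b(j := g))) (bvecs (Suc j))"
proof (rule inj_onI)
  have split: "bvec_comb (Suc j) (b(j := g)) v = bvec_comb j b (v(j := False)) + (if v j then g else 0)" for v
  proof -
    have "(\<Sum>t<j. if v t then (b(j := g)) t else 0) = (\<Sum>t<j. if (v(j := False)) t then b t else 0)"
      by (rule sum.cong) auto
    then show ?thesis unfolding bvec_comb_def by simp
  qed
  have restrict: "v(j := False) \<in> bvecs j" if "v \<in> bvecs (Suc j)" for v
    using that unfolding bvecs_def by (auto simp: Suc_le_eq)
  fix v w assume v: "v \<in> bvecs (Suc j)" and w: "w \<in> bvecs (Suc j)"
    and eq: "bvec_comb (Suc j) (b(j := g)) v = bvec_comb (Suc j) (b(j := g)) w"
  show "v = w"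
  proof (cases "v j = w j")
    case True
    then have "bvec_comb j b (v(j := False)) = bvec_comb j b (w(j := False))"
      using eq split[of v] split[of w] by simp
    then have "v(j := False) = w(j := False)" using inj restrict v w by (meson inj_onD)
    show ?thesis
    proof
      fix i show "v i = w i"
        using fun_cong[OF \<open>v(j := False) = w(j := False)\<close>, of i] True by (cases "i = j") auto
    qed
  next
    case False
    have cancel: "\<And>A B x::'b. A + x = B \<Longrightarrow> x = A + B"
      using c2 by (metis add.assoc add_0_left)
    have "g = bvec_comb j b (v(j := False)) + bvec_comb j b (w(j := False))"
    proof (cases "v j")
      case True
      then have "bvec_comb j b (v(j := False)) + g = bvec_comb j b (w(j := False))"
        using eq split[of v] split[of w] False by simp
      then show ?thesis by (rule cancel)
    next
      case F: False
      then have "bvec_comb j b (w(j := False)) + g = bvec_comb j b (v(j := False))"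
        using eq split[of v] split[of w] False by simp
      then show ?thesis by (subst add.commute) (rule cancel)
    qed
    also have "\<dots> = bvec_comb j b (\<lambda>i. (v(j := False)) i \<noteq> (w(j := False)) i)"
      by (rule bvec_comb_xor[OF c2, symmetric])
    finally have "g \<in> bvec_comb j b ` bvecs j"
      using restrict[OF v] restrict[OF w] unfolding bvecs_def by auto
    with g show ?thesis by contradiction
  qed
qed

lemma exists_F2_basis:
  fixes G :: "'b::ab_group_add set"
  assumes c2: "\<forall>x::'b. x + x = 0" and z: "0 \<in> G" and cl: "\<forall>x\<in>G. \<forall>y\<in>G. x + y \<in> G"
    and fin: "finite G" and card: "card G = 2 ^ k"
  shows "\<exists>b. (\<forall>t<k. b t \<in> G) \<and> bij_betw (bvec_comb k b) (bvecs k) G"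
proof -
  have "\<exists>b. (\<forall>t<j. b t \<in> G) \<and> inj_on (bvec_comb j b) (bvecs j)" if "j \<le> k" for j
    using that
  proof (induction j)
    case 0
    have "bvecs 0 = {\<lambda>_. False}" unfolding bvecs_def by auto
    then show ?case by auto
  next
    case (Suc j)
    then obtain b where b: "\<forall>t<j. b t \<in> G" and inj: "inj_on (bvec_comb j b) (bvecs j)" by auto
    have "card (bvec_comb j b ` bvecs j) < card G"
      using card_image[OF inj] card_bvecs Suc.prems card by simp
    then have "\<not> G \<subseteq> bvec_comb j b ` bvecs j"
      using card_mono[OF finite_imageI[OF finite_bvecs]] not_le by blast
    then obtain g where g: "g \<in> G" "g \<notin> bvec_comb j b ` bvecs j" by blast
    have "inj_on (bvec_comb (Suc j) (b(j := g))) (bvecs (Suc j))"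
      by (rule inj_bvec_comb_extend[OF c2 inj g(2)])
    moreover have "\<forall>t<Suc j. (b(j := g)) t \<in> G" using b g(1) by (auto simp: less_Suc_eq)
    ultimately show ?case by blast
  qed
  then obtain b where b: "\<forall>t<k. b t \<in> G" and inj: "inj_on (bvec_comb k b) (bvecs k)" by blast
  have "bvec_comb k b ` bvecs k \<subseteq> G" using bvec_comb_in[OF z cl] b by auto
  moreover have "card (bvec_comb k b ` bvecs k) = card G"
    using card_image[OF inj] card_bvecs card by simp
  ultimately have "bvec_comb k b ` bvecs k = G" using card_subset_eq[OF fin] by simp
  then show ?thesis using b inj unfolding bij_betw_def by blast
qed

section \<open>Additive maps are linearized polynomials\<close>

lemma linearized_coeffs_unique:
  fixes G :: "'a::field set" and c c' :: "nat \<Rightarrow> 'a"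
  assumes card: "card G = 2 ^ k"
    and eq: "\<forall>x\<in>G. (\<Sum>t<k. c t * x ^ (2 ^ t)) = (\<Sum>t<k. c' t * x ^ (2 ^ t))"
    and t: "t < k"
  shows "c t = c' t"
proof -
  define p where "p = (\<Sum>t<k. monom (c t - c' t) (2 ^ t))"
  have coeff_p: "coeff p i = (\<Sum>t<k. if 2 ^ t = i then c t - c' t else 0)" for i
    unfolding p_def coeff_sum by simp
  have "p = 0"
  proof (rule ccontr)
    assume p0: "p \<noteq> 0"
    have "degree p \<le> 2 ^ (k - 1)"
    proof (rule degree_le, intro allI impI)
      fix i :: nat assume i: "2 ^ (k - 1) < i"
      have "2 ^ t \<noteq> i" if "t < k" for t
        using power_increasing[of t "k - 1" "2::nat"] that i by linarith
      then show "coeff p i = 0" unfolding coeff_p by (intro sum.neutral) auto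
    qed
    also have "\<dots> < card G" using t card by (simp add: power_strict_increasing)
    also have "card G \<le> card {x. poly p x = 0}"
    proof (rule card_mono[OF poly_roots_finite[OF p0]])
      have "poly p x = (\<Sum>t<k. c t * x ^ (2 ^ t)) - (\<Sum>t<k. c' t * x ^ (2 ^ t))" for x
        unfolding p_def poly_sum poly_monom sum_subtractf[symmetric] by (simp add: algebra_simps)
      then show "G \<subseteq> {x. poly p x = 0}" using eq by auto
    qed
    also have "\<dots> \<le> degree p" by (rule card_poly_roots_bound[OF p0])
    finally show False by simp
  qed
  moreover have "coeff p (2 ^ t) = c t - c' t"
  proof -
    have "coeff p (2 ^ t) = (\<Sum>s\<in>{t}. if 2 ^ s = (2::nat) ^ t then c s - c' s else 0)"
      unfolding coeff_p using t by (intro sum.mono_neutral_right) auto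
    then show ?thesis by simp
  qed
  ultimately show ?thesis by simp
qed

text \<open>An additive map is determined by its values on a basis.\<close>
lemma card_additive_maps_le:
  fixes G :: "'b::ab_group_add set"
  assumes c2: "\<forall>x::'b. x + x = 0" and z: "0 \<in> G" and cl: "\<forall>x\<in>G. \<forall>y\<in>G. x + y \<in> G"
    and fin: "finite G" and card: "card G = 2 ^ k"
  shows "card {h \<in> G \<rightarrow>\<^sub>E (UNIV :: 'c::{ab_group_add,finite} set). \<forall>x\<in>G. \<forall>y\<in>G. h (x + y) = h x + h y}
    \<le> card (UNIV :: 'c set) ^ k"
    (is "card ?Add \<le> _")
proof -
  obtain b where b: "\<forall>t<k. b t \<in> G" and bij: "bij_betw (bvec_comb k b) (bvecs k) G"
    using exists_F2_basis[OF c2 z cl fin card] by blast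
  define ev where "ev h = restrict (\<lambda>t. h (b t)) {..<k}" for h :: "'b \<Rightarrow> 'c"
  have "inj_on ev ?Add"
  proof (rule inj_onI)
    fix h h' assume h: "h \<in> ?Add" and h': "h' \<in> ?Add" and ev: "ev h = ev h'"
    have hb: "h (b t) = h' (b t)" if "t < k" for t
      using fun_cong[OF ev, of t] that unfolding ev_def by simp
    show "h = h'"
    proof
      fix x
      show "h x = h' x"
      proof (cases "x \<in> G")
        case True
        then obtain v where v: "x = bvec_comb k b v" using bij unfolding bij_betw_def by auto
        have "h x = bvec_comb k (\<lambda>t. h (b t)) v"
          unfolding v by (rule additive_bvec_comb[OF z cl b]) (use h in blast)
        also have "\<dots> = bvec_comb k (\<lambda>t. h' (b t)) v"
          unfolding bvec_comb_def using hb by (intro sum.cong) auto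
        also have "\<dots> = h' x"
          unfolding v by (rule additive_bvec_comb[OF z cl b, symmetric]) (use h' in blast)
        finally show ?thesis .
      qed (use h h' in \<open>auto simp: PiE_def extensional_def\<close>)
    qed
  qed
  then have "card ?Add = card (ev ` ?Add)" by (rule card_image[symmetric])
  also have "\<dots> \<le> card ({..<k} \<rightarrow>\<^sub>E (UNIV :: 'c set))"
  proof (rule card_mono)
    show "ev ` ?Add \<subseteq> {..<k} \<rightarrow>\<^sub>E UNIV"
      unfolding ev_def by (rule image_subsetI, rule iffD2[OF restrict_PiE_iff]) simp
  qed (simp add: finite_PiE)
  also have "\<dots> = card (UNIV :: 'c set) ^ k" by (simp add: card_PiE)
  finally show ?thesis .
qed

text \<open>Counting argument: the linearized polynomials of degree below \<open>2 ^ k\<close> give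
  \<open>card (UNIV :: 'a set) ^ k\<close> distinct additive maps on \<open>G\<close>, which is all of them.\<close>
lemma additive_eq_linearized:
  fixes G :: "'a::{field,finite} set"
  assumes char2: "(2::'a) = 0" and z: "0 \<in> G" and cl: "\<forall>x\<in>G. \<forall>y\<in>G. x + y \<in> G"
    and card: "card G = 2 ^ k" and add: "\<forall>x\<in>G. \<forall>y\<in>G. h (x + y) = h x + h y"
  shows "\<exists>c. \<forall>x\<in>G. h x = (\<Sum>t<k. c t * x ^ (2 ^ t))"
proof -
  define Add where "Add = {h \<in> G \<rightarrow>\<^sub>E (UNIV :: 'a set). \<forall>x\<in>G. \<forall>y\<in>G. h (x + y) = h x + h y}"
  define lin where "lin c = restrict (\<lambda>x. \<Sum>t<k. c t * x ^ (2 ^ t)) G" for c :: "nat \<Rightarrow> 'a"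
  define Lin where "Lin = lin ` ({..<k} \<rightarrow>\<^sub>E UNIV)"
  have c2: "\<forall>x::'a. x + x = 0" using char2_add_self[OF char2] by simp
  have sub: "Lin \<subseteq> Add"
  proof
    fix l assume "l \<in> Lin"
    then obtain c where l: "l = lin c" unfolding Lin_def by auto
    show "l \<in> Add" unfolding Add_def l lin_def
      using cl by (auto simp: char2_power2_add[OF char2] distrib_left sum.distrib)
  qed
  have "inj_on lin ({..<k} \<rightarrow>\<^sub>E UNIV)"
  proof (rule inj_onI)
    fix c c' assume c: "c \<in> {..<k} \<rightarrow>\<^sub>E UNIV" and c': "c' \<in> {..<k} \<rightarrow>\<^sub>E UNIV"
      and eq: "lin c = lin c'"
    have "\<forall>x\<in>G. (\<Sum>t<k. c t * x ^ (2 ^ t)) = (\<Sum>t<k. c' t * x ^ (2 ^ t))"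
    proof
      fix x assume "x \<in> G"
      then show "(\<Sum>t<k. c t * x ^ (2 ^ t)) = (\<Sum>t<k. c' t * x ^ (2 ^ t))"
        using fun_cong[OF eq, of x] unfolding lin_def by simp
    qed
    then have "c t = c' t" if "t < k" for t using linearized_coeffs_unique[OF card _ that] by blast
    then show "c = c'" using c c' by (intro PiE_ext) auto
  qed
  then have "card Lin = card (UNIV :: 'a set) ^ k"
    unfolding Lin_def by (simp add: card_image card_PiE)
  moreover have "card Add \<le> card (UNIV :: 'a set) ^ k"
    unfolding Add_def by (rule card_additive_maps_le[OF c2 z cl finite card])
  ultimately have "Lin = Add" using card_subset_eq[OF finite sub] card_mono[OF finite sub] by simp
  moreover have "restrict h G \<in> Add" unfolding Add_def using add cl by auto
  ultimately obtain c where c: "restrict h G = lin c" unfolding Lin_def by auto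
  have "h x = (\<Sum>t<k. c t * x ^ (2 ^ t))" if "x \<in> G" for x
    using fun_cong[OF c, of x] that unfolding lin_def by simp
  then show ?thesis by blast
qed

section \<open>The field of order \<open>2 ^ (r * m)\<close> and its subfield of order \<open>2 ^ m\<close>\<close>

lemma nat_minus_1_dvd_power_minus_1: "1 \<le> (x::nat) \<Longrightarrow> (x - 1) dvd (x ^ r - 1)"
proof (induction r)
  case (Suc r)
  have "x ^ Suc r - 1 = x * (x ^ r - 1) + (x - 1)"
    using Suc.prems by (simp add: algebra_simps diff_mult_distrib2)
  moreover have "(x - 1) dvd x * (x ^ r - 1) + (x - 1)"
    by (rule dvd_add[OF dvd_mult[OF Suc.IH[OF Suc.prems]] dvd_refl])
  ultimately show ?case by simp
qed simp

lemma sum_powers_root_of_unity: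
  fixes g :: "'a::field"
  assumes "g ^ d = 1"
  shows "(\<Sum>j<d. (g ^ j) ^ e) = (if g ^ e = 1 then of_nat d else 0)"
proof -
  have swap: "(g ^ j) ^ e = (g ^ e) ^ j" for j by (simp add: power_mult[symmetric] mult.commute)
  show ?thesis
  proof (cases "g ^ e = 1")
    case False
    have "(g ^ e) ^ d = 1" using assms by (simp add: swap[symmetric])
    then show ?thesis using False by (simp add: swap geometric_sum)
  qed (simp add: swap)
qed

locale primitive_gf2 =
  fixes \<alpha> :: "'a::{field,finite}" and r m :: nat
  assumes card: "card (UNIV :: 'a set) = 2 ^ (r * m)"
    and r_pos: "1 \<le> r" and m_ge: "3 \<le> m"
    and primitive: "\<forall>z::'a. z \<noteq> 0 \<longrightarrow> (\<exists>k::nat. z = \<alpha> ^ k)"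
begin

abbreviation "N \<equiv> (2::nat) ^ (r * m)"
abbreviation "M \<equiv> (2::nat) ^ m - 1"

lemma rm_ge_3: "3 \<le> r * m"
  using r_pos m_ge by (metis le_trans mult_le_mono1 mult_1)

lemma N_ge_8: "8 \<le> N"
  using power_increasing[of 3 "r * m" "2::nat"] rm_ge_3 by simp

lemma odd_N_minus_1: "odd (N - 1)"
proof -
  have "even N" using r_pos m_ge by simp
  then show ?thesis using N_ge_8 by presburger
qed

lemma odd_M: "odd M"
  using m_ge by simp

lemma M_ge_7: "7 \<le> M"
  using power_increasing[of 3 m "2::nat"] m_ge by simp

lemma alpha_nonzero: "\<alpha> \<noteq> 0"
proof
  assume a: "\<alpha> = 0"
  have "\<not> UNIV \<subseteq> {0, 1::'a}"
  proof
    assume "UNIV \<subseteq> {0, 1::'a}"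
    then have "card (UNIV::'a set) \<le> card {0, 1::'a}" by (intro card_mono) auto
    also have "\<dots> \<le> 2" by (simp add: card_insert_le_m1)
    finally show False using card N_ge_8 by simp
  qed
  then obtain z :: 'a where z: "z \<noteq> 0" "z \<noteq> 1" by auto
  then obtain k where "z = \<alpha> ^ k" using primitive by auto
  then show False using z a by (cases k) auto
qed

lemma alpha_power_diff:
  assumes "\<alpha> ^ a = \<alpha> ^ b" "a \<le> b"
  shows "\<alpha> ^ (b - a) = 1"
proof -
  have "\<alpha> ^ b = \<alpha> ^ a * \<alpha> ^ (b - a)" using assms(2) by (simp add: power_add[symmetric])
  then have "\<alpha> ^ a * \<alpha> ^ (b - a) = \<alpha> ^ a * 1" using assms(1) by simp
  then show ?thesis using alpha_nonzero by simp
qed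

lemma exists_period: "\<exists>d>0. \<alpha> ^ d = 1"
proof -
  have "\<not> inj (\<lambda>k::nat. \<alpha> ^ k)"
  proof
    assume "inj (\<lambda>k::nat. \<alpha> ^ k)"
    then have "finite (UNIV :: nat set)" using finite_imageD[of "\<lambda>k::nat. \<alpha> ^ k" UNIV] by simp
    then show False by simp
  qed
  then obtain a b where ab: "\<alpha> ^ a = \<alpha> ^ b" "a < b"
    unfolding inj_def by (metis linorder_neqE_nat)
  then show ?thesis using alpha_power_diff[of a b] by (intro exI[of _ "b - a"]) auto
qed

definition order_alpha :: nat where
  "order_alpha = (LEAST d. 0 < d \<and> \<alpha> ^ d = 1)"

lemma order_alpha: "order_alpha > 0" "\<alpha> ^ order_alpha = 1"
  using LeastI_ex[OF exists_period] unfolding order_alpha_def by auto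

lemma order_alpha_min: "0 < d \<Longrightarrow> d < order_alpha \<Longrightarrow> \<alpha> ^ d \<noteq> 1"
  unfolding order_alpha_def using not_less_Least by blast

lemma alpha_power_mod_order: "\<alpha> ^ k = \<alpha> ^ (k mod order_alpha)"
proof -
  have "\<alpha> ^ k = \<alpha> ^ (k div order_alpha * order_alpha + k mod order_alpha)" by simp
  also have "\<dots> = \<alpha> ^ (k div order_alpha * order_alpha) * \<alpha> ^ (k mod order_alpha)"
    by (rule power_add)
  also have "\<alpha> ^ (k div order_alpha * order_alpha) = (\<alpha> ^ order_alpha) ^ (k div order_alpha)"
    by (subst mult.commute) (rule power_mult)
  finally show ?thesis using order_alpha by simp
qed

lemma inj_on_alpha_power: "inj_on (\<lambda>k. \<alpha> ^ k) {..<order_alpha}"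
proof (rule inj_onI)
  have gen: "a = b" if "a < b" "b < order_alpha" "\<alpha> ^ a = \<alpha> ^ b" for a b
    using alpha_power_diff[of a b] order_alpha_min[of "b - a"] that by simp
  fix a b assume "a \<in> {..<order_alpha}" "b \<in> {..<order_alpha}" "\<alpha> ^ a = \<alpha> ^ b"
  then show "a = b" using gen[of a b] gen[of b a] by (cases a b rule: linorder_cases) auto
qed

lemma nonzero_eq_alpha_powers: "UNIV - {0} = (\<lambda>k. \<alpha> ^ k) ` {..<order_alpha}"
proof
  show "UNIV - {0} \<subseteq> (\<lambda>k. \<alpha> ^ k) ` {..<order_alpha}"
  proof
    fix z :: 'a assume "z \<in> UNIV - {0}"
    then obtain k where "z = \<alpha> ^ k" using primitive by auto
    then have "z = \<alpha> ^ (k mod order_alpha)" using alpha_power_mod_order by simp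
    moreover have "k mod order_alpha < order_alpha" using order_alpha by simp
    ultimately show "z \<in> (\<lambda>k. \<alpha> ^ k) ` {..<order_alpha}" by auto
  qed
  show "(\<lambda>k. \<alpha> ^ k) ` {..<order_alpha} \<subseteq> UNIV - {0}" using alpha_nonzero by auto
qed

lemma order_alpha_eq: "order_alpha = N - 1"
proof -
  have "card (UNIV - {0::'a}) = N - 1" using card by (simp add: card_Diff_singleton)
  moreover have "card (UNIV - {0::'a}) = order_alpha"
    using nonzero_eq_alpha_powers card_image[OF inj_on_alpha_power] by simp
  ultimately show ?thesis by simp
qed

lemma alpha_power_eq_iff: "\<alpha> ^ a = \<alpha> ^ b \<longleftrightarrow> a mod (N - 1) = b mod (N - 1)"
proof
  assume "\<alpha> ^ a = \<alpha> ^ b"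
  then have "\<alpha> ^ (a mod order_alpha) = \<alpha> ^ (b mod order_alpha)"
    using alpha_power_mod_order[of a] alpha_power_mod_order[of b] by simp
  moreover have "a mod order_alpha < order_alpha" "b mod order_alpha < order_alpha"
    using order_alpha by auto
  ultimately have "a mod order_alpha = b mod order_alpha"
    using inj_on_alpha_power by (auto dest: inj_onD)
  then show "a mod (N - 1) = b mod (N - 1)" using order_alpha_eq by simp
next
  assume "a mod (N - 1) = b mod (N - 1)"
  then show "\<alpha> ^ a = \<alpha> ^ b"
    using alpha_power_mod_order[of a] alpha_power_mod_order[of b] order_alpha_eq by simp
qed

lemma alpha_power_eq_1_iff: "\<alpha> ^ a = 1 \<longleftrightarrow> (N - 1) dvd a"
  using alpha_power_eq_iff[of a 0] by (simp add: mod_eq_0_iff_dvd)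

lemma alpha_ne_1: "\<alpha> \<noteq> 1"
  using alpha_power_eq_1_iff[of 1] N_ge_8 by auto

lemma power_N_minus_1: "(z::'a) \<noteq> 0 \<Longrightarrow> z ^ (N - 1) = 1"
proof -
  assume "z \<noteq> 0"
  then obtain k where "z = \<alpha> ^ k" using primitive by auto
  then have "z ^ (N - 1) = (\<alpha> ^ (N - 1)) ^ k" by (simp add: power_mult[symmetric] mult.commute)
  then show ?thesis using alpha_power_eq_1_iff[of "N - 1"] by simp
qed

lemma char_two: "(2::'a) = 0"
proof -
  have "(-1::'a) ^ (N - 1) = 1" by (rule power_N_minus_1) simp
  moreover have "odd (N - 1)" using odd_N_minus_1 .
  ultimately have "(-1::'a) = 1" by simp
  then have "(1::'a) + 1 = 1 + -1" by simp
  then show ?thesis by simp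
qed

lemma of_nat_eq_of_bool_odd: "(of_nat n :: 'a) = of_bool (odd n)"
  by (rule char2_of_nat[OF char_two])

lemma M_dvd_N_minus_1: "M dvd (N - 1)"
  using nat_minus_1_dvd_power_minus_1[of "2^m" r] by (simp add: power_mult[symmetric] mult.commute)

definition Q :: nat where
  "Q = (N - 1) div M"

lemma M_times_Q: "M * Q = N - 1" unfolding Q_def using M_dvd_N_minus_1 by simp

definition K :: "'a set" where
  "K = {y. y ^ (2 ^ m) = y}"

lemma nonzero_in_K_iff: "y \<noteq> 0 \<Longrightarrow> y \<in> K \<longleftrightarrow> y ^ M = 1"
proof -
  assume y: "y \<noteq> 0"
  have "(2::nat) ^ m = Suc M" by simp
  then have "y ^ (2^m) = y ^ M * y" by (metis power_Suc2)
  then show ?thesis unfolding K_def using y by auto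
qed

text \<open>\<open>\<beta>\<close> generates the multiplicative group of the subfield \<open>K\<close>.\<close>
definition \<beta> :: 'a where
  "\<beta> = \<alpha> ^ Q"

lemma beta_power_eq_iff: "\<beta> ^ a = \<beta> ^ b \<longleftrightarrow> a mod M = b mod M"
proof -
  have "\<beta> ^ a = \<beta> ^ b \<longleftrightarrow> (Q * a) mod (M * Q) = (Q * b) mod (M * Q)"
    unfolding \<beta>_def power_mult[symmetric] alpha_power_eq_iff M_times_Q by simp
  also have "\<dots> \<longleftrightarrow> a mod M = b mod M"
  proof -
    have "Q > 0" using M_times_Q N_ge_8 by (cases "Q = 0") auto
    then show ?thesis by (simp add: mult.commute[of M Q])
  qed
  finally show ?thesis .
qed

lemma beta_power_M: "\<beta> ^ M = 1" using beta_power_eq_iff[of M 0] by simp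

lemma K_minus_zero_eq: "K - {0} = (\<lambda>j. \<beta> ^ j) ` {..<M}"
proof
  show "K - {0} \<subseteq> (\<lambda>j. \<beta> ^ j) ` {..<M}"
  proof
    fix y assume y: "y \<in> K - {0}"
    then obtain k where k: "y = \<alpha> ^ k" using primitive by auto
    have "y ^ M = 1" using y nonzero_in_K_iff by auto
    then have "\<alpha> ^ (k * M) = 1" using k by (simp add: power_mult)
    then have "(M * Q) dvd (k * M)" using alpha_power_eq_1_iff M_times_Q by simp
    moreover have "(2::nat)^m > 1" using M_ge_7 by arith
    ultimately have "Q dvd k" by (simp add: mult.commute[of k])
    then obtain j where j: "k = Q * j" by (auto elim: dvdE)
    then have "y = \<beta> ^ j" unfolding \<beta>_def k by (simp add: power_mult)
    also have "\<dots> = \<beta> ^ (j mod M)" using beta_power_eq_iff by simp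
    finally show "y \<in> (\<lambda>j. \<beta> ^ j) ` {..<M}" using M_ge_7 by auto
  qed
  show "(\<lambda>j. \<beta> ^ j) ` {..<M} \<subseteq> K - {0}"
  proof
    fix y assume "y \<in> (\<lambda>j. \<beta> ^ j) ` {..<M}"
    then obtain j where y: "y = \<beta> ^ j" by auto
    have nz: "y \<noteq> 0" using y alpha_nonzero unfolding \<beta>_def by simp
    have "y ^ M = (\<beta> ^ M) ^ j" using y by (simp add: power_mult[symmetric] mult.commute)
    then show "y \<in> K - {0}" using nonzero_in_K_iff[OF nz] beta_power_M nz by simp
  qed
qed

lemma inj_on_beta_power: "inj_on (\<lambda>j. \<beta> ^ j) {..<M}"
  by (rule inj_onI) (simp add: beta_power_eq_iff)

lemma zero_in_K: "0 \<in> K" unfolding K_def by simp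

lemma card_K: "card K = 2 ^ m"
proof -
  have "card (K - {0}) = M" using K_minus_zero_eq card_image[OF inj_on_beta_power] by simp
  moreover have "card K > 0" using zero_in_K by (auto simp: card_gt_0_iff)
  moreover have "(2::nat)^m \<ge> 1" by simp
  ultimately show ?thesis using card_Diff_singleton[OF zero_in_K] by arith
qed

lemma K_add_closed: "x \<in> K \<Longrightarrow> y \<in> K \<Longrightarrow> x + y \<in> K"
  unfolding K_def by (simp add: char2_power2_add[OF char_two])

lemma sum_power_UNIV: "e > 0 \<Longrightarrow> (\<Sum>x\<in>(UNIV::'a set). x ^ e) = (if (N - 1) dvd e then 1 else 0)"
proof -
  assume e: "e > 0"
  have "(\<Sum>x\<in>(UNIV::'a set). x ^ e) = (\<Sum>x\<in>UNIV - {0}. x ^ e)"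
    using e by (intro sum.mono_neutral_right) auto
  also have "\<dots> = (\<Sum>j<order_alpha. (\<alpha> ^ j) ^ e)"
    unfolding nonzero_eq_alpha_powers by (rule sum.reindex[OF inj_on_alpha_power, unfolded o_def])
  also have "\<dots> = (if \<alpha> ^ e = 1 then of_nat (N - 1) else 0)"
    using sum_powers_root_of_unity[OF order_alpha(2)] order_alpha_eq by simp
  also have "(of_nat (N - 1) :: 'a) = 1"
    using odd_N_minus_1 by (simp add: of_nat_eq_of_bool_odd)
  finally show ?thesis using alpha_power_eq_1_iff by simp
qed

lemma sum_power_K: "e > 0 \<Longrightarrow> (\<Sum>y\<in>K. y ^ e) = (if M dvd e then 1 else 0)"
proof -
  assume e: "e > 0"
  have "(\<Sum>y\<in>K. y ^ e) = (\<Sum>y\<in>K - {0}. y ^ e)"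
    using e by (intro sum.mono_neutral_right) auto
  also have "\<dots> = (\<Sum>j<M. (\<beta> ^ j) ^ e)"
    unfolding K_minus_zero_eq by (rule sum.reindex[OF inj_on_beta_power, unfolded o_def])
  also have "\<dots> = (if \<beta> ^ e = 1 then of_nat M else 0)"
    using sum_powers_root_of_unity[OF beta_power_M] by simp
  also have "(of_nat M :: 'a) = 1"
    using odd_M by (simp add: of_nat_eq_of_bool_odd)
  finally show ?thesis using beta_power_eq_iff[of e 0] by (simp add: mod_eq_0_iff_dvd)
qed

text \<open>Expanding the product, every exponent of \<open>x\<close> has binary weight at most
  \<open>card T + 1 < r * m\<close>, so no exponent is a multiple of \<open>N - 1\<close>.\<close>
lemma sum_times_prod_linearized:
  assumes T: "finite T" "card T + 1 < r * m"
  shows "(\<Sum>x\<in>(UNIV::'a set). x * (\<Prod>i\<in>T. \<Sum>t<k. c i t * x ^ (2 ^ t))) = 0"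
proof -
  define E where "E \<sigma> = 1 + (\<Sum>i\<in>T. (2::nat) ^ \<sigma> i)" for \<sigma>
  have expand: "x * (\<Prod>i\<in>T. \<Sum>t<k. c i t * x ^ (2 ^ t))
      = (\<Sum>\<sigma>\<in>T \<rightarrow>\<^sub>E {..<k}. (\<Prod>i\<in>T. c i (\<sigma> i)) * x ^ E \<sigma>)" for x
    unfolding prod_sum_PiE[OF T(1) finite_lessThan] sum_distrib_left E_def
    by (rule sum.cong) (simp_all add: prod.distrib power_sum power_add algebra_simps)
  have "(\<Sum>x\<in>(UNIV::'a set). x ^ E \<sigma>) = 0" for \<sigma>
  proof -
    have "binary_weight (E \<sigma>) \<le> 1 + card T"
      using binary_weight_add_le[of 1 "\<Sum>i\<in>T. 2 ^ \<sigma> i"] binary_weight_sum_le[of "\<lambda>i. 2 ^ \<sigma> i" T]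
        binary_weight_pow2[of 0] unfolding E_def by simp
    moreover have "r * m \<le> binary_weight (E \<sigma>)" if "(N - 1) dvd E \<sigma>"
      by (rule binary_weight_ge_if_mask_dvd) (use that r_pos m_ge in \<open>simp_all add: E_def\<close>)
    ultimately have "\<not> (N - 1) dvd E \<sigma>" using T(2) by linarith
    then show ?thesis using sum_power_UNIV[of "E \<sigma>"] unfolding E_def by simp
  qed
  then show ?thesis
    unfolding expand by (subst sum.swap) (simp add: sum_distrib_left[symmetric])
qed

text \<open>In the expansion of the product, the term without any factor in \<open>y\<close> is killed by
  \<open>\<Sum>y\<in>K. y ^ e = 0\<close>, and every other term has fewer than \<open>r * m - 1\<close> factors in \<open>x\<close>.\<close>
lemma sum_prod_linear_forms:
  assumes S: "finite S" "card S < r * m" and e: "0 < e" "e < M"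
  shows "(\<Sum>x\<in>(UNIV::'a set). \<Sum>y\<in>K. x * y ^ e * (\<Prod>i\<in>S. (\<Sum>t<k. c i t * x ^ (2 ^ t)) + B i y)) = 0"
proof -
  define A where "A i x = (\<Sum>t<k. c i t * x ^ (2 ^ t))" for i x
  define F where "F T x y = (x * (\<Prod>i\<in>T. A i x)) * (y ^ e * (\<Prod>i\<in>S - T. B i y))" for T x y
  have "x * y ^ e * (\<Prod>i\<in>S. A i x + B i y) = (\<Sum>T\<in>Pow S. F T x y)" for x y
    unfolding prod_add[OF S(1)] sum_distrib_left F_def by (simp add: algebra_simps)
  then have "(\<Sum>x\<in>(UNIV::'a set). \<Sum>y\<in>K. x * y ^ e * (\<Prod>i\<in>S. A i x + B i y))
      = (\<Sum>x\<in>(UNIV::'a set). \<Sum>T\<in>Pow S. \<Sum>y\<in>K. F T x y)"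
    by (simp add: sum.swap[of _ K])
  also have "\<dots> = (\<Sum>T\<in>Pow S. \<Sum>x\<in>(UNIV::'a set). \<Sum>y\<in>K. F T x y)" by (rule sum.swap)
  also have "\<dots> = (\<Sum>T\<in>Pow S. (\<Sum>x\<in>(UNIV::'a set). x * (\<Prod>i\<in>T. A i x)) * (\<Sum>y\<in>K. y ^ e * (\<Prod>i\<in>S - T. B i y)))"
    unfolding F_def by (simp add: sum_product)
  also have "\<dots> = 0"
  proof (rule sum.neutral, intro ballI)
    fix T assume "T \<in> Pow S"
    show "(\<Sum>x\<in>(UNIV::'a set). x * (\<Prod>i\<in>T. A i x)) * (\<Sum>y\<in>K. y ^ e * (\<Prod>i\<in>S - T. B i y)) = 0"
    proof (cases "T = S")
      case True
      have "\<not> M dvd e" using e by (auto dest: nat_dvd_not_less)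
      then show ?thesis using True sum_power_K[OF e(1)] by simp
    next
      case False
      then have "card T < card S" using \<open>T \<in> Pow S\<close> S(1) by (auto intro: psubset_card_mono)
      then show ?thesis
        using sum_times_prod_linearized[where T=T and k=k and c=c] S \<open>T \<in> Pow S\<close> finite_subset unfolding A_def by force
    qed
  qed
  finally show ?thesis unfolding A_def .
qed

end

section \<open>The bivariate representation\<close>

locale delta_support = primitive_gf2 \<alpha> r m for \<alpha> :: "'a::{field,finite}" and r m +
  fixes s :: nat and u :: int
begin

abbreviation "L \<equiv> (2::nat) ^ (r * m - 1)"

lemma L_facts: "2 * L = N" "even L" "L < N - 1"
proof -
  have rm: "r * m = Suc (r * m - 1)" using rm_ge_3 by simp
  show "2 * L = N" by (subst (2) rm) simp
  show "even L" using rm_ge_3 by simp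
  show "L < N - 1" using \<open>2 * L = N\<close> N_ge_8 by simp
qed

definition Delta :: "'a set" where
  "Delta = {\<gamma>. \<exists>i. s \<le> i \<and> i \<le> s + L - 1 \<and> \<gamma> = \<alpha> ^ i}"

definition supp :: "('a \<times> 'a) set" where
  "supp = {(\<gamma> * y powi u, y) | \<gamma> y. y ^ (2 ^ m) = y \<and> y \<noteq> 0 \<and>
     (\<exists>i. s \<le> i \<and> i \<le> s + 2 ^ (r * m - 1) - 1 \<and> \<gamma> = \<alpha> ^ i)}"

definition coef :: "nat \<Rightarrow> 'a" where
  "coef i = inverse (\<alpha> ^ (i * s)) * (1 + inverse (\<alpha> ^ i)) ^ (L - 1)"

lemma Delta_eq_image: "Delta = (\<lambda>t. \<alpha> ^ (s + t)) ` {..<L}"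
proof
  show "Delta \<subseteq> (\<lambda>t. \<alpha> ^ (s + t)) ` {..<L}"
  proof
    fix z assume "z \<in> Delta"
    then obtain i where "s \<le> i" "i \<le> s + L - 1" "z = \<alpha> ^ i" unfolding Delta_def by auto
    moreover have "0 < L" by simp
    ultimately have "i - s < L" "z = \<alpha> ^ (s + (i - s))" by (linarith, simp)
    then show "z \<in> (\<lambda>t. \<alpha> ^ (s + t)) ` {..<L}" by blast
  qed
  show "(\<lambda>t. \<alpha> ^ (s + t)) ` {..<L} \<subseteq> Delta"
    unfolding Delta_def by (auto intro!: exI[of _ "s + _"])
qed

lemma inj_on_Delta_param: "inj_on (\<lambda>t. \<alpha> ^ (s + t)) {..<L}"
proof -
  have "t = t'" if "t < t'" "t' < N - 1" "(s + t) mod (N - 1) = (s + t') mod (N - 1)" for t t'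
  proof -
    have "(N - 1) dvd (s + t') - (s + t)"
      using that by (subst mod_eq_dvd_iff_nat[symmetric]) auto
    then have "(N - 1) dvd (t' - t)" by simp
    then show ?thesis using that by (simp add: nat_dvd_not_less)
  qed
  then show ?thesis
    unfolding inj_on_def alpha_power_eq_iff using L_facts(3)
    by (metis lessThan_iff linorder_neqE_nat order.strict_trans)
qed

lemma coef_eq_sum: "coef i = (\<Sum>t<L. (inverse (\<alpha> ^ (s + t))) ^ i)"
proof -
  have "coef i = inverse (\<alpha> ^ (i * s)) * (\<Sum>t<L. (inverse (\<alpha> ^ i)) ^ t)"
    unfolding coef_def by (subst char2_geometric[OF char_two]) (rule refl)
  also have "\<dots> = (\<Sum>t<L. (inverse (\<alpha> ^ (s + t))) ^ i)"
    unfolding sum_distrib_left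
    by (rule sum.cong) (simp_all add: power_inverse[symmetric] power_mult[symmetric]
        power_add[symmetric] algebra_simps)
  finally show ?thesis .
qed

lemma sum_powers_1_to_N_minus_2: "(\<Sum>i\<in>{1..N-2}. w ^ i) = (of_bool (w \<noteq> 0 \<and> w \<noteq> 1) :: 'a)"
proof (cases "w = 0 \<or> w = 1")
  case True
  moreover have "(\<Sum>i\<in>{1..N-2}. (0::'a) ^ i) = 0" by (rule sum.neutral) auto
  moreover have "even (N - 2)" using odd_N_minus_1 N_ge_8 by presburger
  ultimately show ?thesis by (auto simp: of_nat_eq_of_bool_odd)
next
  case False
  have "{..<N-1} = insert 0 {1..N-2}" using N_ge_8 by auto
  then have "1 + (\<Sum>i\<in>{1..N-2}. w ^ i) = (\<Sum>i<N-1. w ^ i)" by simp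
  also have "\<dots> = 0" using False power_N_minus_1 by (simp add: geometric_sum)
  finally have "(\<Sum>i\<in>{1..N-2}. w ^ i) = - 1" by (simp add: eq_neg_iff_add_eq_0 add.commute)
  then show ?thesis using False char2_uminus[OF char_two, of 1] by simp
qed

text \<open>The character-sum identity behind the representation: \<open>\<Sum>\<^sub>i coef i * z ^ i\<close>
  counts (mod 2) the \<open>t < L\<close> with \<open>z = \<alpha> ^ (s + t)\<close>, plus \<open>L\<close> terms equal to \<open>1\<close>.\<close>
lemma sum_coef_power: "(\<Sum>i\<in>{1..N-2}. coef i * z ^ i) = of_bool (z \<in> Delta)"
proof (cases "z = 0")
  case True
  then show ?thesis unfolding Delta_def using alpha_nonzero by (auto intro: sum.neutral)
next
  case False
  have "(\<Sum>i\<in>{1..N-2}. coef i * z ^ i) = (\<Sum>t<L. \<Sum>i\<in>{1..N-2}. (z * inverse (\<alpha> ^ (s + t))) ^ i)"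
    unfolding coef_eq_sum sum_distrib_right
    by (subst sum.swap) (simp add: power_mult_distrib mult.commute)
  also have "\<dots> = (\<Sum>t<L. 1 + of_bool (z = \<alpha> ^ (s + t)))"
  proof (rule sum.cong[OF refl])
    fix t
    have "z * inverse (\<alpha> ^ (s + t)) = 1 \<longleftrightarrow> z = \<alpha> ^ (s + t)"
      using alpha_nonzero by (auto simp: field_simps)
    moreover have "z * inverse (\<alpha> ^ (s + t)) \<noteq> 0" using False alpha_nonzero by simp
    ultimately show "(\<Sum>i\<in>{1..N-2}. (z * inverse (\<alpha> ^ (s + t))) ^ i) = 1 + of_bool (z = \<alpha> ^ (s + t))"
      unfolding sum_powers_1_to_N_minus_2 using char_two by auto
  qed
  also have "\<dots> = of_nat L + of_nat (card {t\<in>{..<L}. z = \<alpha> ^ (s + t)})"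
    by (simp add: sum.distrib Int_def)
  also have "card {t\<in>{..<L}. z = \<alpha> ^ (s + t)} = of_bool (z \<in> Delta)"
  proof -
    have "card {t\<in>{..<L}. z = \<alpha> ^ (s + t)} \<le> 1"
      using inj_on_Delta_param by (auto simp: card_le_Suc0_iff_eq inj_on_def)
    moreover have "{t\<in>{..<L}. z = \<alpha> ^ (s + t)} \<noteq> {} \<longleftrightarrow> z \<in> Delta"
      unfolding Delta_eq_image by auto
    ultimately show ?thesis by (cases "z \<in> Delta") (auto simp: le_Suc_eq card_eq_0_iff)
  qed
  finally show ?thesis using L_facts(2) by (simp add: of_nat_eq_of_bool_odd)
qed

lemma sum_split_multiples_M:
  "(\<Sum>i\<in>{1..N-2}. F i) = (\<Sum>i\<in>{i\<in>{1..N-2}. \<not> M dvd i}. F i) + (\<Sum>j\<in>{1..Q-1}. F (M * j))"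
proof -
  have multiples: "{i\<in>{1..N-2}. M dvd i} = (\<lambda>j. M * j) ` {1..Q-1}"
  proof (intro equalityI subsetI)
    fix i assume i: "i \<in> {i\<in>{1..N-2}. M dvd i}"
    then obtain j where j: "i = M * j" by (auto elim: dvdE)
    have "1 \<le> j" using i j by (cases j) auto
    moreover have "M * j < M * Q" using i j M_times_Q N_ge_8 by auto
    ultimately show "i \<in> (\<lambda>j. M * j) ` {1..Q-1}" using j by auto
  next
    fix i assume "i \<in> (\<lambda>j. M * j) ` {1..Q-1}"
    then obtain j where "j \<in> {1..Q-1}" "i = M * j" by blast
    then have j: "i = M * j" "1 \<le> j" "j \<le> Q - 1" by auto
    have "M * j \<le> M * (Q - 1)" using j by simp
    also have "\<dots> = N - 1 - M" using M_times_Q by (simp add: right_diff_distrib')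
    finally show "i \<in> {i\<in>{1..N-2}. M dvd i}" using j M_ge_7 by auto
  qed
  have "inj_on (\<lambda>j. M * j) {1..Q-1}" using M_ge_7 by (auto simp: inj_on_def)
  then have "(\<Sum>i\<in>{i\<in>{1..N-2}. M dvd i}. F i) = (\<Sum>j\<in>{1..Q-1}. F (M * j))"
    unfolding multiples by (rule sum.reindex[unfolded o_def])
  moreover have "{1..N-2} = {i\<in>{1..N-2}. \<not> M dvd i} \<union> {i\<in>{1..N-2}. M dvd i}" by auto
  then have "(\<Sum>i\<in>{1..N-2}. F i) = (\<Sum>i\<in>{i\<in>{1..N-2}. \<not> M dvd i}. F i) + (\<Sum>i\<in>{i\<in>{1..N-2}. M dvd i}. F i)"
    by (metis (no_types, lifting) finite_atLeastAtMost finite_Un sum.union_disjoint disjoint_iff mem_Collect_eq)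
  ultimately show ?thesis by simp
qed

lemma power_int_period:
  assumes "(y::'a) \<noteq> 0" "y ^ M = 1"
  shows "y powi (a + int M * c) = y powi a"
proof -
  have "y powi (int M * c) = (y powi int M) powi c" by (rule power_int_mult)
  also have "y powi int M = y ^ M" by (rule power_int_of_nat)
  finally show ?thesis using assms by (simp add: power_int_add)
qed

text \<open>On \<open>K\<close>, the exponent \<open>M - ((u * i) mod M)\<close> of the representation is \<open>-u * i\<close>.\<close>
lemma power_M_minus_mod:
  assumes "(y::'a) \<noteq> 0" "y ^ M = 1"
  shows "y ^ (M - nat ((u * int i) mod int M)) = (y powi (- u)) ^ i"
proof -
  define a where "a = (u * int i) mod int M"
  have M: "0 < int M" using M_ge_7 by linarith
  have a: "0 \<le> a" "a < int M" unfolding a_def by (rule pos_mod_sign[OF M], rule pos_mod_bound[OF M])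
  then have "nat a \<le> M" by linarith
  then have "int (M - nat a) = int M - a" using of_nat_diff[of "nat a" M, where 'a=int] a(1) by simp
  then have "y ^ (M - nat a) = y powi (int M - a)" by (metis power_int_of_nat)
  also have "int M - a = - u * int i + int M * ((u * int i) div int M + 1)"
    unfolding a_def by (simp add: algebra_simps minus_mod_eq_mult_div[symmetric])
  also have "y powi \<dots> = y powi (- u * int i)" by (rule power_int_period[OF assms])
  also have "\<dots> = (y powi (- u)) ^ i" by (simp add: power_int_power')
  finally show ?thesis unfolding a_def .
qed

lemma supp_iff_image:
  assumes "y \<in> K" "y \<noteq> 0"
  shows "(x, y) \<in> supp \<longleftrightarrow> x \<in> (\<lambda>\<gamma>. \<gamma> * y powi u) ` Delta"
  unfolding supp_def Delta_def using assms unfolding K_def by auto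

lemma supp_iff_Delta:
  assumes "y \<in> K" "y \<noteq> 0"
  shows "(x, y) \<in> supp \<longleftrightarrow> x * y powi (- u) \<in> Delta"
proof -
  have "(x, y) \<in> supp \<longleftrightarrow> (\<exists>\<gamma>\<in>Delta. x = \<gamma> * y powi u)"
    using supp_iff_image[OF assms] by auto
  also have "\<dots> \<longleftrightarrow> x * y powi (- u) \<in> Delta"
  proof
    assume "\<exists>\<gamma>\<in>Delta. x = \<gamma> * y powi u"
    then obtain \<gamma> where "\<gamma> \<in> Delta" "x = \<gamma> * y powi u" by blast
    moreover have "y powi u \<noteq> 0" using assms(2) by simp
    ultimately show "x * y powi (- u) \<in> Delta" by (simp add: power_int_minus mult.assoc)
  next
    assume "x * y powi (- u) \<in> Delta"
    moreover have "x = x * y powi (- u) * y powi u"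
      using assms(2) by (simp add: power_int_minus)
    ultimately show "\<exists>\<gamma>\<in>Delta. x = \<gamma> * y powi u" by blast
  qed
  finally show ?thesis .
qed

lemma bivariate_representation:
  assumes y: "y \<in> K"
  shows "(if (x, y) \<in> supp then 1 else 0) =
              (\<Sum>i\<in>{i\<in>{1..2 ^ (r * m) - 2}. \<not> (2 ^ m - 1) dvd i}.
                 inverse (\<alpha> ^ (i * s)) * (1 + inverse (\<alpha> ^ i)) ^ (2 ^ (r * m - 1) - 1)
                 * x ^ i * y ^ (2 ^ m - 1 - nat ((u * int i) mod (2 ^ m - 1))))
            + (\<Sum>j\<in>{1..(2 ^ (r * m) - 1) div (2 ^ m - 1) - 1}.
                 inverse (\<alpha> ^ ((2 ^ m - 1) * j * s))
                 * (1 + inverse (\<alpha> ^ ((2 ^ m - 1) * j))) ^ (2 ^ (r * m - 1) - 1)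
                 * x ^ ((2 ^ m - 1) * j) * y ^ (2 ^ m - 1))"
    (is "?f = ?S1 + ?S2")
proof -
  have M: "(2::int) ^ m - 1 = int M" by (simp add: of_nat_diff)
  have S1: "?S1 = (\<Sum>i\<in>{i\<in>{1..N-2}. \<not> M dvd i}. coef i * x ^ i * y ^ (M - nat ((u * int i) mod int M)))"
    unfolding coef_def M by simp
  have S2: "?S2 = (\<Sum>j\<in>{1..Q-1}. coef (M * j) * x ^ (M * j) * y ^ M)"
    unfolding coef_def Q_def by (simp add: mult.assoc)
  show ?thesis
  proof (cases "y = 0")
    case True
    have "0 < (2::nat) ^ m - 1 - nat ((u * int i) mod (2 ^ m - 1))" for i
    proof -
      have Mpos: "0 < (2::int) ^ m - 1" using M_ge_7 M by linarith
      have "(u * int i) mod (2 ^ m - 1) < 2 ^ m - 1" "0 \<le> (u * int i) mod (2 ^ m - 1)"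
        by (rule pos_mod_bound[OF Mpos], rule pos_mod_sign[OF Mpos])
      then show ?thesis using M by linarith
    qed
    then have "?S1 = 0" using True by (simp add: zero_power)
    moreover have "?S2 = 0" unfolding S2 True using M_ge_7 by (simp add: zero_power)
    ultimately show ?thesis unfolding supp_def using True by simp
  next
    case False
    define w where "w = y powi (- u)"
    have yM: "y ^ M = 1" using nonzero_in_K_iff[OF False] y by simp
    have wM: "w ^ (M * j) = 1" for j
    proof -
      have "w ^ (M * j) = y powi (0 + int M * (- u * int j))"
        unfolding w_def by (simp add: power_int_power' algebra_simps)
      also have "\<dots> = 1" unfolding power_int_period[OF False yM] by simp
      finally show ?thesis .
    qed
    have "?S1 + ?S2 = (\<Sum>i\<in>{i\<in>{1..N-2}. \<not> M dvd i}. coef i * (x * w) ^ i)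
        + (\<Sum>j\<in>{1..Q-1}. coef (M * j) * (x * w) ^ (M * j))"
    proof -
      have "y ^ (M - nat ((u * int i) mod int M)) = w ^ i" for i
        unfolding w_def by (rule power_M_minus_mod[OF False yM])
      then show ?thesis unfolding S1 S2
        by (simp only: yM wM power_mult_distrib mult.assoc mult_1_right)
    qed
    also have "\<dots> = (\<Sum>i\<in>{1..N-2}. coef i * (x * w) ^ i)" by (rule sum_split_multiples_M[symmetric])
    also have "\<dots> = of_bool ((x, y) \<in> supp)"
      unfolding sum_coef_power w_def supp_iff_Delta[OF y False] ..
    finally show ?thesis by simp
  qed
qed

lemma sum_Delta_nonzero: "(\<Sum>\<gamma>\<in>Delta. \<gamma>) \<noteq> 0"
proof -
  have "(\<Sum>\<gamma>\<in>Delta. \<gamma>) = (\<Sum>t<L. \<alpha> ^ (s + t))"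
    unfolding Delta_eq_image by (rule sum.reindex[OF inj_on_Delta_param, unfolded o_def])
  also have "\<dots> = \<alpha> ^ s * (\<Sum>t<L. \<alpha> ^ t)" by (simp add: power_add sum_distrib_left)
  also have "\<dots> = \<alpha> ^ s * ((\<alpha> ^ L - 1) / (\<alpha> - 1))"
    using alpha_ne_1 by (simp add: geometric_sum)
  finally show ?thesis
    using alpha_nonzero alpha_ne_1 alpha_power_eq_1_iff[of L] L_facts(3) nat_dvd_not_less[of L "N - 1"]
    by simp
qed

text \<open>Pairing the indicator of the support with \<open>x * y ^ e\<close>, where \<open>e \<equiv> -u (mod M)\<close>,
  picks out the sum of \<open>Delta\<close>, once for each of the \<open>M\<close> (an odd number) nonzero \<open>y\<close>.\<close>
lemma sum_pairing_supp:
  assumes e: "int e + u = int M * c"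
  shows "(\<Sum>x\<in>(UNIV::'a set). \<Sum>y\<in>K. x * y ^ e * of_bool ((x, y) \<in> supp)) = (\<Sum>\<gamma>\<in>Delta. \<gamma>)"
proof -
  define \<sigma> where "\<sigma> = (\<Sum>\<gamma>\<in>Delta. \<gamma>)"
  have inner: "(\<Sum>x\<in>(UNIV::'a set). x * y ^ e * of_bool ((x, y) \<in> supp)) = \<sigma>"
    if y: "y \<in> K" "y \<noteq> 0" for y
  proof -
    have yM: "y ^ M = 1" using nonzero_in_K_iff y by simp
    have "inj_on (\<lambda>\<gamma>. \<gamma> * y powi u) Delta" using y(2) by (auto simp: inj_on_def)
    then have "(\<Sum>x\<in>(\<lambda>\<gamma>. \<gamma> * y powi u) ` Delta. x) = y powi u * \<sigma>"
      unfolding \<sigma>_def by (simp add: sum.reindex sum_distrib_left mult.commute)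
    moreover have "(\<Sum>x\<in>(UNIV::'a set). x * y ^ e * of_bool ((x, y) \<in> supp))
        = y ^ e * (\<Sum>x\<in>(\<lambda>\<gamma>. \<gamma> * y powi u) ` Delta. x)"
      unfolding supp_iff_image[OF y] sum_distrib_left
      by (simp add: Int_def mult.commute)
    ultimately have "(\<Sum>x\<in>(UNIV::'a set). x * y ^ e * of_bool ((x, y) \<in> supp)) = y ^ e * (y powi u * \<sigma>)"
      by simp
    also have "\<dots> = y powi (int e + u) * \<sigma>"
      using y(2) by (simp add: power_int_add mult.assoc)
    also have "y powi (int e + u) = 1"
      unfolding e using power_int_period[OF y(2) yM, of 0 c] by simp
    finally show ?thesis by simp
  qed
  have "(\<Sum>x\<in>(UNIV::'a set). \<Sum>y\<in>K. x * y ^ e * of_bool ((x, y) \<in> supp))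
      = (\<Sum>y\<in>K - {0}. \<Sum>x\<in>(UNIV::'a set). x * y ^ e * of_bool ((x, y) \<in> supp))"
    by (subst sum.swap) (rule sum.mono_neutral_right, auto simp: supp_def)
  also have "\<dots> = (\<Sum>y\<in>K - {0}. \<sigma>)" using inner by (intro sum.cong) auto
  also have "\<dots> = of_nat M * \<sigma>"
    using K_minus_zero_eq card_image[OF inj_on_beta_power] by simp
  finally show ?thesis unfolding \<sigma>_def using odd_M by (simp add: of_nat_eq_of_bool_odd)
qed

end

section \<open>The algebraic degree\<close>

context delta_support
begin

abbreviation "D \<equiv> (UNIV :: 'a set) \<times> K"
abbreviation "n \<equiv> (r + 1) * m"

lemma card_D: "card D = 2 ^ n"
  by (simp add: card_cartesian_product card_K card power_add[symmetric] algebra_simps)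

lemma exists_F2_coord_iso: "\<exists>\<phi>. F2_coord_iso n \<phi> D"
proof -
  have c2: "\<forall>x::'a \<times> 'a. x + x = 0"
    using char2_add_self[OF char_two] by (simp add: prod_eq_iff)
  have "(0::'a \<times> 'a) \<in> D" using zero_in_K by (simp add: zero_prod_def)
  moreover have "\<forall>x\<in>D. \<forall>y\<in>D. x + y \<in> D" using K_add_closed by (auto simp: plus_prod_def)
  ultimately obtain b where "bij_betw (bvec_comb n b) (bvecs n) D"
    using exists_F2_basis[OF c2 _ _ _ card_D] by auto
  then have "F2_coord_iso n (bvec_comb n b) D"
    unfolding F2_coord_iso_def using bvec_comb_xor[OF c2, of n b] by simp
  then show ?thesis by blast
qed

definition phi :: "(nat \<Rightarrow> bool) \<Rightarrow> 'a \<times> 'a" where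
  "phi = (SOME \<phi>. F2_coord_iso n \<phi> D)"

lemma phi_iso: "F2_coord_iso n phi D"
  unfolding phi_def using someI_ex[OF exists_F2_coord_iso] .

lemma bij_betw_phi: "bij_betw phi (bvecs n) D"
  using phi_iso unfolding F2_coord_iso_def by simp

lemma phi_xor: "v \<in> bvecs n \<Longrightarrow> w \<in> bvecs n \<Longrightarrow> phi (\<lambda>i. v i \<noteq> w i) = phi v + phi w"
  using phi_iso unfolding F2_coord_iso_def by (simp add: prod_eq_iff)

lemma phi_bvec_of: "T \<subseteq> {..<n} \<Longrightarrow> phi (bvec_of T) = (\<Sum>l\<in>T. phi (bvec_of {l}))"
proof (induction T rule: infinite_finite_induct)
  case (infinite T)
  then show ?case using finite_subset by blast
next
  case empty
  have "(\<lambda>_. False) \<in> bvecs n" unfolding bvecs_def by simp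
  from phi_xor[OF this this] have "phi (\<lambda>_. False) = 0"
    using char2_add_self[OF char_two] by (simp add: prod_eq_iff)
  then show ?case by (simp add: bvec_of_def)
next
  case (insert l T)
  have "bvec_of (insert l T) = (\<lambda>i. bvec_of T i \<noteq> bvec_of {l} i)"
    using insert(2) unfolding bvec_of_def by auto
  moreover have "bvec_of T \<in> bvecs n" "bvec_of {l} \<in> bvecs n"
    using insert(4) by (auto intro: bvec_of_in_bvecs)
  ultimately have "phi (bvec_of (insert l T)) = phi (bvec_of T) + phi (bvec_of {l})"
    by (simp only: phi_xor)
  then show ?case using insert by (simp add: add.commute)
qed

lemma binary_weight_multiple_term:
  assumes j: "j \<in> {1..Q-1}"
  shows "binary_weight (M * j) + binary_weight M \<le> n - 2"
proof -
  have "M * j \<le> M * (Q - 1)" using j by simp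
  also have "\<dots> = N - 1 - M" using M_times_Q by (simp add: right_diff_distrib')
  finally have Mj: "M * j \<le> N - 1 - M" .
  have "binary_weight (M * j) \<le> r * m - 2"
  proof (rule binary_weight_le_minus2)
    show "M * j < 2 ^ (r * m)" "M * j \<noteq> 2 ^ (r * m) - 1" using Mj M_ge_7 N_ge_8 by auto
    fix t show "M * j \<noteq> 2 ^ (r * m) - 1 - 2 ^ t"
    proof
      assume e: "M * j = 2 ^ (r * m) - 1 - 2 ^ t"
      have "M \<le> M * j" using j by simp
      then have "N - 1 = M * j + 2 ^ t" using e M_ge_7 by linarith
      then have "M dvd 2 ^ t" using M_dvd_N_minus_1 by (simp add: dvd_add_right_iff)
      moreover have "coprime M (2 ^ t)" using odd_M by simp
      ultimately have "is_unit M" using coprime_common_divisor[of M "2 ^ t" M] by simp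
      then show False using M_ge_7 by simp
    qed
  qed
  then show ?thesis using binary_weight_mask[of m] rm_ge_3 by (simp add: algebra_simps)
qed

definition coord :: "nat \<Rightarrow> 'a \<times> 'a \<Rightarrow> 'a" where
  "coord i p = of_bool (inv_into (bvecs n) phi p i)"

lemma coord_add:
  assumes "p \<in> D" "q \<in> D"
  shows "coord i (p + q) = coord i p + coord i q"
proof -
  define \<psi> where "\<psi> = inv_into (bvecs n) phi"
  have \<psi>: "\<psi> p \<in> bvecs n" "phi (\<psi> p) = p" if "p \<in> D" for p
  proof -
    show "\<psi> p \<in> bvecs n"
      unfolding \<psi>_def by (rule inv_into_into) (use bij_betw_phi that in \<open>simp add: bij_betw_def\<close>)
    show "phi (\<psi> p) = p" unfolding \<psi>_def by (rule bij_betw_inv_into_right[OF bij_betw_phi that])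
  qed
  have xor: "(\<lambda>i. \<psi> p i \<noteq> \<psi> q i) \<in> bvecs n"
    using \<psi>(1)[OF assms(1)] \<psi>(1)[OF assms(2)] unfolding bvecs_def by auto
  have "phi (\<lambda>i. \<psi> p i \<noteq> \<psi> q i) = p + q"
    using phi_xor[OF \<psi>(1)[OF assms(1)] \<psi>(1)[OF assms(2)]] \<psi>(2) assms by simp
  then have "\<psi> (p + q) = (\<lambda>i. \<psi> p i \<noteq> \<psi> q i)"
    using inv_into_f_f[OF _ xor, of phi] bij_betw_phi unfolding \<psi>_def bij_betw_def by simp
  moreover have "(of_bool (a \<noteq> b) :: 'a) = of_bool a + of_bool b" for a b
    using char_two by (cases a; cases b) simp_all
  ultimately show ?thesis unfolding coord_def \<psi>_def[symmetric] by simp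
qed

text \<open>Coordinates are \<open>F\<^sub>2\<close>-linear on \<open>D\<close>, so their restrictions to the \<open>x\<close>-axis are
  linearized polynomials.\<close>
lemma coord_linearized:
  "\<exists>c. \<forall>i x. \<forall>y\<in>K. coord i (x, y) = (\<Sum>t<r * m. c i t * x ^ (2 ^ t)) + coord i (0, y)"
proof -
  have "\<forall>i. \<exists>c. \<forall>x\<in>(UNIV::'a set). coord i (x, 0) = (\<Sum>t<r * m. c t * x ^ (2 ^ t))"
  proof
    fix i
    have add: "coord i (x + x', 0) = coord i (x, 0) + coord i (x', 0)" for x x'
      using coord_add[of "(x, 0)" "(x', 0)" i] zero_in_K by simp
    show "\<exists>c. \<forall>x\<in>(UNIV::'a set). coord i (x, 0) = (\<Sum>t<r * m. c t * x ^ (2 ^ t))"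
      by (rule additive_eq_linearized[OF char_two]) (simp_all add: card add)
  qed
  then have "\<exists>c. \<forall>i. \<forall>x\<in>(UNIV::'a set). coord i (x, 0) = (\<Sum>t<r * m. c i t * x ^ (2 ^ t))"
    by (rule choice)
  then obtain c where c: "\<forall>i. \<forall>x\<in>(UNIV::'a set). coord i (x, 0) = (\<Sum>t<r * m. c i t * x ^ (2 ^ t))"
    by blast
  show ?thesis
  proof (intro exI allI ballI)
    fix i x y assume "y \<in> K"
    then have "coord i (x, y) = coord i (x, 0) + coord i (0, y)"
      using coord_add[of "(x, 0)" "(0, y)" i] zero_in_K by simp
    then show "coord i (x, y) = (\<Sum>t<r * m. c i t * x ^ (2 ^ t)) + coord i (0, y)" using c by simp
  qed
qed

end

locale delta_support_coprime = delta_support +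
  assumes u_coprime: "gcd u (2 ^ m - 1) = 1"
begin

lemma mod_M_nonzero:
  assumes "\<not> M dvd i"
  shows "(u * int i) mod (2 ^ m - 1) \<noteq> 0"
proof
  have M: "(2::int) ^ m - 1 = int M" by (simp add: of_nat_diff)
  assume "(u * int i) mod (2 ^ m - 1) = 0"
  then have "int M dvd u * int i" unfolding M by (simp only: dvd_eq_mod_eq_0)
  moreover have "coprime (int M) u"
    using u_coprime unfolding M by (simp add: coprime_iff_gcd_eq_1 gcd.commute)
  ultimately have "M dvd i" using coprime_dvd_mult_right_iff int_dvd_int_iff by blast
  with assms show False ..
qed

lemma binary_weight_nonmultiple_term:
  assumes i: "i \<in> {1..N-2}" and "\<not> M dvd i"
  shows "binary_weight i + binary_weight (2 ^ m - 1 - nat ((u * int i) mod (2 ^ m - 1))) \<le> n - 2"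
proof -
  have "i < 2 ^ (r * m) - 1" using i N_ge_8 by auto
  then have w1: "binary_weight i < r * m" by (rule binary_weight_less_if_less_mask)
  define a where "a = (u * int i) mod (2 ^ m - 1)"
  have "0 < (2::int) ^ m - 1" using power_increasing[of 3 m "2::int"] m_ge by simp
  then have "0 < a"
    unfolding a_def using mod_M_nonzero[OF assms(2)] by (simp add: order_le_neq_trans)
  then have "2 ^ m - 1 - nat a < 2 ^ m - 1" using M_ge_7 by simp
  then have "binary_weight (2 ^ m - 1 - nat a) < m" by (rule binary_weight_less_if_less_mask)
  with w1 show ?thesis unfolding a_def by (simp add: algebra_simps)
qed

text \<open>By the representation, every ANF coefficient over \<open>S\<close> is a combination of sums
  over the subcube of \<open>S\<close> of monomials \<open>x ^ i * y ^ j\<close> with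
  \<open>binary_weight i + binary_weight j \<le> n - 2\<close>.\<close>
lemma anf_degree_le_n_minus_2: "anf_degree n ((\<lambda>p. p \<in> supp) \<circ> phi) \<le> n - 2"
proof (rule anf_degree_le)
  fix S assume Sn: "S \<subseteq> {..<n}" and cS: "n - 2 < card S"
  have fS: "finite S" using Sn finite_subset by auto
  define X where "X l = fst (phi (bvec_of {l}))" for l
  define Y where "Y l = snd (phi (bvec_of {l}))" for l
  have phiT: "phi (bvec_of T) = (\<Sum>l\<in>T. X l, \<Sum>l\<in>T. Y l)" if "T \<in> Pow S" for T
    using phi_bvec_of[of T] that Sn unfolding X_def Y_def by (auto simp: prod_eq_iff fst_sum snd_sum)
  have YK: "(\<Sum>l\<in>T. Y l) \<in> K" if "T \<in> Pow S" for T
  proof -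
    have "bvec_of T \<in> bvecs n" using that Sn by (intro bvec_of_in_bvecs) auto
    then have "phi (bvec_of T) \<in> D" using bij_betw_phi unfolding bij_betw_def by auto
    then show ?thesis using phiT[OF that] by auto
  qed
  define C1 where "C1 i = inverse (\<alpha> ^ (i * s)) * (1 + inverse (\<alpha> ^ i)) ^ (2 ^ (r * m - 1) - 1)" for i
  define e where "e i = 2 ^ m - 1 - nat ((u * int i) mod (2 ^ m - 1))" for i
  define C2 where "C2 j = inverse (\<alpha> ^ ((2 ^ m - 1) * j * s))
    * (1 + inverse (\<alpha> ^ ((2 ^ m - 1) * j))) ^ (2 ^ (r * m - 1) - 1)" for j
  define I where "I = {i\<in>{1..(2::nat) ^ (r * m) - 2}. \<not> (2 ^ m - 1) dvd i}"
  define J where "J = {1..(2 ^ (r * m) - 1) div (2 ^ m - 1) - (1::nat)}"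
  have "of_nat (card {T. T \<subseteq> S \<and> phi (bvec_of T) \<in> supp}) = (\<Sum>T\<in>Pow S. of_bool (phi (bvec_of T) \<in> supp) :: 'a)"
    using fS by (simp add: Int_def)
  also have "\<dots> = (\<Sum>T\<in>Pow S. (\<Sum>i\<in>I. C1 i * (\<Sum>l\<in>T. X l) ^ i * (\<Sum>l\<in>T. Y l) ^ e i)
        + (\<Sum>j\<in>J. C2 j * (\<Sum>l\<in>T. X l) ^ ((2 ^ m - 1) * j) * (\<Sum>l\<in>T. Y l) ^ (2 ^ m - 1)))"
    by (rule sum.cong[OF refl])
      (simp only: phiT bivariate_representation[OF YK] C1_def C2_def e_def I_def J_def of_bool_def)
  also have "\<dots> = (\<Sum>i\<in>I. C1 i * (\<Sum>T\<in>Pow S. (\<Sum>l\<in>T. X l) ^ i * (\<Sum>l\<in>T. Y l) ^ e i))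
        + (\<Sum>j\<in>J. C2 j * (\<Sum>T\<in>Pow S. (\<Sum>l\<in>T. X l) ^ ((2 ^ m - 1) * j) * (\<Sum>l\<in>T. Y l) ^ (2 ^ m - 1)))"
    by (simp add: sum.distrib sum_distrib_left mult.assoc sum.swap[of _ "Pow S"])
  also have "\<dots> = 0"
  proof -
    have "(\<Sum>T\<in>Pow S. (\<Sum>l\<in>T. X l) ^ i * (\<Sum>l\<in>T. Y l) ^ e i) = 0" if "i \<in> I" for i
      using that binary_weight_nonmultiple_term[of i] cS unfolding I_def e_def
      by (intro sum_Pow_monomial_char2[OF char_two fS]) fastforce
    moreover have "(\<Sum>T\<in>Pow S. (\<Sum>l\<in>T. X l) ^ ((2 ^ m - 1) * j) * (\<Sum>l\<in>T. Y l) ^ (2 ^ m - 1)) = 0"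
      if "j \<in> J" for j
      using that binary_weight_multiple_term[of j] cS unfolding J_def Q_def
      by (intro sum_Pow_monomial_char2[OF char_two fS]) fastforce
    ultimately show ?thesis by simp
  qed
  finally have "even (card {T. T \<subseteq> S \<and> phi (bvec_of T) \<in> supp})"
    by (simp add: of_nat_eq_of_bool_odd)
  then show "\<not> anf_coeff ((\<lambda>p. p \<in> supp) \<circ> phi) S" unfolding anf_coeff_def by simp
qed

lemma exists_exponent_minus_u: "\<exists>e c. 0 < e \<and> e < M \<and> int e + u = int M * c"
proof -
  have M: "(2::int) ^ m - 1 = int M" by (simp add: of_nat_diff)
  have Mpos: "0 < int M" using M_ge_7 by linarith
  define a where "a = (- u) mod int M"
  have a: "0 \<le> a" "a < int M"
    unfolding a_def by (rule pos_mod_sign[OF Mpos], rule pos_mod_bound[OF Mpos])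
  have "a \<noteq> 0"
  proof
    assume "a = 0"
    then have "int M dvd u" unfolding a_def by (simp add: dvd_eq_mod_eq_0[symmetric])
    then have "int M = 1" using u_coprime unfolding M by (simp add: gcd.commute gcd_proj1_iff)
    then have "M = 1" by (simp only: of_nat_eq_1_iff)
    then show False using M_ge_7 by simp
  qed
  moreover have "a + u = int M * (- ((- u) div int M))"
    unfolding a_def by (simp add: minus_div_mult_eq_mod[symmetric] algebra_simps)
  ultimately show ?thesis
  proof (intro exI[of _ "nat a"] exI[of _ "- ((- u) div int M)"] conjI)
    show "0 < nat a" "nat a < M" using a \<open>a \<noteq> 0\<close> nat_less_iff[OF a(1)] by auto
  qed (use a(1) in simp)
qed

text \<open>If the degree were below \<open>r * m\<close>, the ANF would write the indicator of the support as
  a sum of products of fewer than \<open>r * m\<close> coordinates, and pairing with \<open>x * y ^ e\<close> would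
  give \<open>0\<close> instead of the nonzero sum of \<open>Delta\<close>.\<close>
lemma anf_degree_ge_rm: "r * m \<le> anf_degree n ((\<lambda>p. p \<in> supp) \<circ> phi)"
proof (rule ccontr)
  define g where "g = (\<lambda>p. p \<in> supp) \<circ> phi"
  assume "\<not> r * m \<le> anf_degree n ((\<lambda>p. p \<in> supp) \<circ> phi)"
  then have small: "anf_degree n g < r * m" unfolding g_def by simp
  obtain a where "(\<forall>S. S \<subseteq> {..<n} \<and> a S \<longrightarrow> card S \<le> anf_degree n g) \<and>
      (\<forall>v\<in>bvecs n. g v = odd (card {S. S \<subseteq> {..<n} \<and> a S \<and> (\<forall>i\<in>S. v i)}))"
    using anf_degree_witness[of n g] by (rule exE)
  then have deg: "\<forall>S. S \<subseteq> {..<n} \<and> a S \<longrightarrow> card S \<le> anf_degree n g"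
    and rep: "\<forall>v\<in>bvecs n. g v = odd (card {S. S \<subseteq> {..<n} \<and> a S \<and> (\<forall>i\<in>S. v i)})"
    by auto
  define A where "A = {S. S \<subseteq> {..<n} \<and> a S}"
  obtain c where c: "\<forall>i x. \<forall>y\<in>K. coord i (x, y) = (\<Sum>t<r * m. c i t * x ^ (2 ^ t)) + coord i (0, y)"
    using coord_linearized by blast
  obtain e k where e: "0 < e" "e < M" "int e + u = int M * k" using exists_exponent_minus_u by blast
  define F where "F S x y = x * y ^ e * (\<Prod>i\<in>S. (\<Sum>t<r * m. c i t * x ^ (2 ^ t)) + coord i (0, y))"
    for S x y
  have indicator: "of_bool ((x, y) \<in> supp)
      = (\<Sum>S\<in>A. \<Prod>i\<in>S. (\<Sum>t<r * m. c i t * x ^ (2 ^ t)) + coord i (0, y))" if "y \<in> K" for x y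
  proof -
    define \<psi> where "\<psi> = inv_into (bvecs n) phi"
    have xy: "(x, y) \<in> D" using that by simp
    have \<psi>: "\<psi> (x, y) \<in> bvecs n" "phi (\<psi> (x, y)) = (x, y)"
      unfolding \<psi>_def using bij_betw_inv_into_right[OF bij_betw_phi xy] inv_into_into[of "(x, y)" phi]
        bij_betw_phi xy by (simp_all add: bij_betw_def)
    have "of_bool ((x, y) \<in> supp) = (of_bool (g (\<psi> (x, y))) :: 'a)" unfolding g_def using \<psi> by simp
    also have "\<dots> = (\<Sum>S\<in>A. \<Prod>i\<in>S. coord i (x, y))"
      unfolding A_def coord_def \<psi>_def[symmetric] by (rule anf_indicator_sum_prod[OF char_two rep \<psi>(1)])
    also have "\<dots> = (\<Sum>S\<in>A. \<Prod>i\<in>S. (\<Sum>t<r * m. c i t * x ^ (2 ^ t)) + coord i (0, y))"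
      using c that by (intro sum.cong prod.cong refl) blast
    finally show ?thesis .
  qed
  have "(\<Sum>\<gamma>\<in>Delta. \<gamma>) = (\<Sum>x\<in>(UNIV::'a set). \<Sum>y\<in>K. x * y ^ e * of_bool ((x, y) \<in> supp))"
    by (rule sum_pairing_supp[OF e(3), symmetric])
  also have "\<dots> = (\<Sum>x\<in>(UNIV::'a set). \<Sum>y\<in>K. \<Sum>S\<in>A. F S x y)"
    unfolding F_def by (rule sum.cong[OF refl], rule sum.cong[OF refl]) (simp add: indicator sum_distrib_left)
  also have "\<dots> = (\<Sum>x\<in>(UNIV::'a set). \<Sum>S\<in>A. \<Sum>y\<in>K. F S x y)"
    by (rule sum.cong[OF refl], rule sum.swap)
  also have "\<dots> = (\<Sum>S\<in>A. \<Sum>x\<in>(UNIV::'a set). \<Sum>y\<in>K. F S x y)"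
    by (rule sum.swap)
  also have "\<dots> = 0"
  proof (rule sum.neutral, intro ballI)
    fix S assume "S \<in> A"
    then have "finite S" "card S < r * m"
      using deg small finite_subset[of S "{..<n}"] unfolding A_def by auto
    then show "(\<Sum>x\<in>(UNIV::'a set). \<Sum>y\<in>K. F S x y) = 0"
      unfolding F_def using e(1,2) by (rule sum_prod_linear_forms)
  qed
  finally show False using sum_Delta_nonzero by contradiction
qed

end

theorem theorem1:
  fixes \<alpha> :: "'a::{field,finite}" and r m s :: nat and u :: int
  assumes card: "card (UNIV :: 'a set) = 2 ^ (r * m)"
    and r_odd: "odd r" and r_pos: "r \<ge> 1" and m_ge: "m \<ge> 3"
    and u_coprime: "gcd u (2 ^ m - 1) = 1"
    and primitive: "\<forall>z::'a. z \<noteq> 0 \<longrightarrow> (\<exists>k::nat. z = \<alpha> ^ k)"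
    and s_le: "s \<le> 2 ^ (r * m) - 2"
  defines "K \<equiv> {y::'a. y ^ (2 ^ m) = y}"
    and "supp \<equiv> {(\<gamma> * y powi u, y) | \<gamma> y. y ^ (2 ^ m) = y \<and> y \<noteq> 0 \<and> (\<exists>i. s \<le> i \<and> i \<le> s + 2 ^ (r * m - 1) - 1 \<and> \<gamma> = \<alpha> ^ i)}"
    and "n \<equiv> (r + 1) * m"
  shows "(\<forall>x::'a. \<forall>y\<in>K.
            (if (x, y) \<in> supp then 1 else 0) =
              (\<Sum>i\<in>{i\<in>{1..2 ^ (r * m) - 2}. \<not> (2 ^ m - 1) dvd i}.
                 inverse (\<alpha> ^ (i * s)) * (1 + inverse (\<alpha> ^ i)) ^ (2 ^ (r * m - 1) - 1)
                 * x ^ i * y ^ (2 ^ m - 1 - nat ((u * int i) mod (2 ^ m - 1))))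
            + (\<Sum>j\<in>{1..(2 ^ (r * m) - 1) div (2 ^ m - 1) - 1}.
                 inverse (\<alpha> ^ ((2 ^ m - 1) * j * s))
                 * (1 + inverse (\<alpha> ^ ((2 ^ m - 1) * j))) ^ (2 ^ (r * m - 1) - 1)
                 * x ^ ((2 ^ m - 1) * j) * y ^ (2 ^ m - 1)))
         \<and> n - m \<le> bool_alg_deg n (UNIV \<times> K) (\<lambda>p. p \<in> supp)
         \<and> bool_alg_deg n (UNIV \<times> K) (\<lambda>p. p \<in> supp) \<le> n - 2"
proof -
  interpret F: delta_support_coprime \<alpha> r m s u
    by unfold_locales (use card r_pos m_ge primitive u_coprime in auto)
  have K: "K = F.K" unfolding K_def F.K_def ..
  have supp: "supp = F.supp" unfolding supp_def F.supp_def ..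
  have deg: "bool_alg_deg n (UNIV \<times> F.K) (\<lambda>p. p \<in> F.supp) = anf_degree n ((\<lambda>p. p \<in> F.supp) \<circ> F.phi)"
    unfolding bool_alg_deg_def F.phi_def n_def ..
  have "n - m = r * m" unfolding n_def by (simp add: algebra_simps)
  then show ?thesis
    unfolding K supp deg
    by (intro conjI allI ballI F.bivariate_representation)
      (use F.anf_degree_ge_rm F.anf_degree_le_n_minus_2 n_def in simp_all)
qed

end
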